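(* Let $\mathcal{D}$ be a distribution over samples $(\bm{x},y)$, $\ell(\bm{w},\bm{x},y)$ a loss differentiable in $\bm{w}$, and let $\mathcal{W}\subset\mathbb{R}^d$ be a bounded convex set with diameter $D_{\mathcal{W}}<\infty$. Suppose there is a function $G(\bm{x},y)\ge0$ with $\|\nabla_{\bm{w}}\ell(\bm{w},\bm{x},y)\|\le G(\bm{x},y)$ for all $\bm{w}\in\mathcal{W}$ and all $(\bm{x},y)$ in the support of $\mathcal{D}$, and that for some $k>1$ and $G>0$, $\left(\mathbb{E}_{(\bm{x},y)\sim\mathcal{D}}[G(\bm{x},y)^k]\right)^{1/k}\le G$. Let $\mathcal{Z}=\{(\bm{x}_i,y_i)\}_{i=1}^n$ be i.i.d. from $\mathcal{D}$, $f_i(\bm{w})=\ell(\bm{w},\bm{x}_i,y_i)$, $f=\frac1n\sum_if_i$, and suppose $f$ is convex. Fix $\gamma\in(0,1)$ and $T\ge1$, and run DP-SGD over $\mathcal{W}$ with $\tau=\frac{G}{\gamma^{1/k}}\left(\frac1T+\varphi^2\right)^{-\frac1{2k}}$, $\eta_t=\eta=\frac{D_{\mathcal{W}}}{T\tau}\left(\frac1T+\varphi^2\right)^{-\frac12}$ for all $t<T$, and $\sigma_n^2=\frac{\nu T\log(1/\delta)\tau^2}{n^2\varepsilon^2}$. Then with probability at least $1-\gamma$ over the random dataset $\mathcal{Z}$, $$\mathrm{OR}(T)\le\frac{5D_{\mathcal{W}}G}{2\gamma^{1/k}}\left(\frac1T+\varphi^2\right)^{\frac12(1-\frac1k)}.$$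 In particular, for $T=\frac1{\varphi^2}$, $\mathrm{OR}(T)\le\frac{5D_{\mathcal{W}}G}{2^{\frac12(1+\frac1k)}\gamma^{1/k}}\varphi^{1-\frac1k}$.
   Context: For $\bm{z}\in\mathbb{R}^d$ and $c>0$, $\mathrm{clip}(\bm{z},c)=\bm{z}\min(1,c/\|\bm{z}\|)$ ($\|\cdot\|$ Euclidean). DP-SGD on $f=\frac1n\sum_if_i$ over $\mathcal{W}$: given $\bm{w}_0\in\mathcal{W}$, $T$, step sizes $\eta_t$, a parameter $b\ge1$, clip norm $\tau$, noise variance $\sigma_n^2$: for $t=0,\dots,T-1$, form $\mathcal{S}_t\subseteq[n]$ by including each index independently with probability $b/n$; $\bm{g}_t=\frac1b\sum_{i\in\mathcal{S}_t}\mathrm{clip}(\nabla f_i(\bm{w}_t),\tau)+\bm{\zeta}_t$, $\bm{\zeta}_t\sim\mathcal{N}(\bm{0},\sigma_n^2I_d)$ independent; $\bm{w}_{t+1}=\Pi_{\mathcal{W}}(\bm{w}_t-\eta_t\bm{g}_t)$ (Euclidean projection). Output $\bm{w}_{\mathrm{priv}}=\bm{w}_{\widehat t}$, $\widehat t$ uniform on $\{0,\dots,T-1\}$. Here $\varepsilon>0$, $\delta\in(0,1)$, $\nu>0$ a fixed absolute constant, $\varphi=\frac{\sqrt{\nu d\log(1/\delta)}}{n\varepsilon}$. The optimization risk is $\mathrm{OR}(T)=\mathbb{E}[f(\bm{w}_{\mathrm{priv}})]-f(\bm{w}^* )$ with $\bm{w}^*\in\arg\min_{\bm{w}\in\mathcal{W}}f(\bm{w})$,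 the expectation being over the algorithm's randomness conditional on $\mathcal{Z}$. *)

theory Defs
  imports "HOL-Analysis.Analysis" "HOL-Probability.Probability"
begin

definition clip :: "'v::real_normed_vector \<Rightarrow> real \<Rightarrow> 'v" where
  "clip z c = min 1 (c / norm z) *\<^sub>R z"

definition emp_obj :: "('w \<Rightarrow> 'z \<Rightarrow> real) \<Rightarrow> nat \<Rightarrow> (nat \<Rightarrow> 'z) \<Rightarrow> 'w \<Rightarrow> real" where
  "emp_obj loss n Z w = (1 / real n) * (\<Sum>i<n. loss w (Z i))"

text \<open>Randomness of DP-SGD: for each step t < T, Poisson-subsampling indicators
  (index i included with probability b/n, independently) and i.i.d. N(0,sigma^2) noise
  coordinates, all mutually independent.\<close>
definition dpsgd_rand ::
  "nat \<Rightarrow> nat \<Rightarrow> real \<Rightarrow> real \<Rightarrow> ((nat \<times> nat \<Rightarrow> bool) \<times> (nat \<times> 'd::finite \<Rightarrow> real)) measure" where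
  "dpsgd_rand n T b \<sigma> =
     (PiM ({0..<T} \<times> {0..<n}) (\<lambda>_. measure_pmf (bernoulli_pmf (b / real n))))
     \<Otimes>\<^sub>M (PiM ({0..<T} \<times> (UNIV :: 'd set)) (\<lambda>_. density lborel (normal_density 0 \<sigma>)))"

fun dpsgd_iter ::
  "(real^'d \<Rightarrow> 'z \<Rightarrow> real^'d) \<Rightarrow> nat \<Rightarrow> (nat \<Rightarrow> 'z) \<Rightarrow> (real^'d) set \<Rightarrow> real^'d
   \<Rightarrow> (nat \<Rightarrow> real) \<Rightarrow> real \<Rightarrow> real
   \<Rightarrow> (nat \<times> nat \<Rightarrow> bool) \<times> (nat \<times> 'd::finite \<Rightarrow> real) \<Rightarrow> nat \<Rightarrow> real^'d" where
  "dpsgd_iter grad n Z W w0 \<eta> b \<tau> \<omega> 0 = w0"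
| "dpsgd_iter grad n Z W w0 \<eta> b \<tau> \<omega> (Suc t) =
     (let w = dpsgd_iter grad n Z W w0 \<eta> b \<tau> \<omega> t;
          g = (1 / b) *\<^sub>R (\<Sum>i\<in>{i. i < n \<and> fst \<omega> (t, i)}. clip (grad w (Z i)) \<tau>)
              + (\<chi> j. snd \<omega> (t, j))
      in closest_point W (w - \<eta> t *\<^sub>R g))"

end

theory Submission
  imports Defs
begin

text \<open>Fix the data set. Projection onto W is nonexpansive and, conditionally on the past, the
  subsampling keeps each index with probability b/n and the Gaussian noise is centred; hence the
  expected squared distance to a comparator w* drops in each step by 2 \<eta> \<langle>c(w_t), w_t - w*\<rangle>
  up to 2 \<eta>^2 \<tau>^2 + \<eta>^2 d \<sigma>^2, where c is the mean of the clipped gradients. Clipping moves a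
  gradient of norm g by at most g^k / \<tau>^(k-1), so convexity gives
  f(w_t) - f(w*) \<le> \<langle>c(w_t), w_t - w*\<rangle> + D \<beta> with \<beta> = (1/n) \<Sigma>_i G(x_i,y_i)^k / \<tau>^(k-1),
  and telescoping gives OR(T) \<le> D^2 / (2 \<eta> T) + \<eta> (2 \<tau>^2 + d \<sigma>^2) / 2 + D \<beta>.
  By Markov's inequality the empirical k-th moment stays below G^k / \<gamma> with probability at
  least 1 - \<gamma>, and the prescribed \<tau> and \<eta> balance the three terms.\<close>

section \<open>Directional derivatives, convexity and projections\<close>

lemma has_derivative_imp_directional_limit:
  fixes f :: "'a::real_normed_vector \<Rightarrow> real"
  assumes "(f has_derivative f') (at x)"
  shows "((\<lambda>s. (f (x + s *\<^sub>R v) - f x) / s) \<longlongrightarrow> f' v) (at 0)"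
proof -
  have "((\<lambda>s. x + s *\<^sub>R v) has_derivative (\<lambda>s. s *\<^sub>R v)) (at 0)"
    by (auto intro!: derivative_eq_intros)
  moreover have "(f has_derivative f') (at (x + 0 *\<^sub>R v))"
    using assms by simp
  ultimately have "((\<lambda>s. f (x + s *\<^sub>R v)) has_derivative (\<lambda>s. f' (s *\<^sub>R v))) (at 0)"
    by (rule has_derivative_compose)
  moreover have "(\<lambda>s. f' (s *\<^sub>R v)) = (*) (f' v)"
    using linear.scaleR[OF has_derivative_linear[OF assms]] by (simp add: fun_eq_iff)
  ultimately have "((\<lambda>s. f (x + s *\<^sub>R v)) has_real_derivative f' v) (at 0)"
    by (simp add: has_field_derivative_def)
  then show ?thesis
    by (simp add: DERIV_def)
qed

lemma borel_measurable_vec_lambda [measurable]: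
  fixes f :: "'d::finite \<Rightarrow> 'a \<Rightarrow> real"
  assumes "\<And>j. f j \<in> borel_measurable M"
  shows "(\<lambda>x. \<chi> j. f j x) \<in> borel_measurable M"
  by (subst borel_measurable_euclidean_space) (auto simp: Basis_vec_def inner_axis assms)

lemma borel_measurable_gradient:
  fixes f :: "real^'d \<Rightarrow> real" and g :: "real^'d \<Rightarrow> real^'d"
  assumes deriv: "\<And>w. (f has_derivative (\<lambda>h. g w \<bullet> h)) (at w)"
  shows "g \<in> borel_measurable borel"
proof -
  have "continuous_on UNIV f"
    by (intro continuous_at_imp_continuous_on ballI has_derivative_continuous[OF deriv])
  then have [measurable]: "f \<in> borel_measurable borel"
    by (rule borel_measurable_continuous_onI)
  have seq: "filterlim (\<lambda>m. 1 / real (Suc m)) (at 0) sequentially"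
    unfolding filterlim_at
    by (auto intro!: LIMSEQ_Suc[OF lim_const_over_n] simp del: of_nat_Suc)
  have "(\<lambda>w. g w $ j) \<in> borel_measurable borel" for j
  proof (rule borel_measurable_LIMSEQ_real)
    define e where "e = (axis j 1 :: real^'d)"
    show "(\<lambda>w. (f (w + (1 / real (Suc m)) *\<^sub>R e) - f w) / (1 / real (Suc m))) \<in> borel_measurable borel" for m
      by measurable
    show "(\<lambda>m. (f (w + (1 / real (Suc m)) *\<^sub>R e) - f w) / (1 / real (Suc m))) \<longlonglongrightarrow> g w $ j" for w
      using filterlim_compose[OF has_derivative_imp_directional_limit[OF deriv[of w], of e] seq]
      by (simp add: e_def inner_axis)
  qed
  then have "(\<lambda>w. \<chi> j. g w $ j) \<in> borel_measurable borel"
    by (rule borel_measurable_vec_lambda)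
  then show ?thesis
    unfolding vec_lambda_eta .
qed

lemma convex_on_imp_above_tangent_has_derivative:
  fixes f :: "'a::real_normed_vector \<Rightarrow> real"
  assumes convex: "convex_on W f" and u: "u \<in> W" and x: "x \<in> W"
    and deriv: "(f has_derivative f') (at u)"
  shows "f' (x - u) \<le> f x - f u"
proof -
  have "((\<lambda>s. (f (u + s *\<^sub>R (x - u)) - f u) / s) \<longlongrightarrow> f' (x - u)) (at_right 0)"
    using has_derivative_imp_directional_limit[OF deriv] by (simp add: filterlim_at_split)
  moreover have "eventually (\<lambda>s. (f (u + s *\<^sub>R (x - u)) - f u) / s \<le> f x - f u) (at_right 0)"
  proof (rule eventually_at_rightI[of 0 1])
    fix s :: real assume s: "s \<in> {0<..<1}"
    have "u + s *\<^sub>R (x - u) = (1 - s) *\<^sub>R u + s *\<^sub>R x"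
      by (simp add: algebra_simps)
    then have "f (u + s *\<^sub>R (x - u)) \<le> (1 - s) * f u + s * f x"
      using convex_onD[OF convex, of s u x] u x s by auto
    then show "(f (u + s *\<^sub>R (x - u)) - f u) / s \<le> f x - f u"
      using s by (simp add: field_simps)
  qed simp
  ultimately show ?thesis
    by (rule tendsto_upperbound) simp
qed

lemma convex_on_excess_le_inner:
  fixes f :: "'a::real_inner \<Rightarrow> real"
  assumes convex: "convex_on W f" and u: "u \<in> W" and x: "x \<in> W"
    and deriv: "(f has_derivative (\<lambda>h. g \<bullet> h)) (at u)"
    and g: "norm (g - c) \<le> \<beta>" and ux: "norm (u - x) \<le> D"
  shows "f u - f x \<le> c \<bullet> (u - x) + D * \<beta>"
proof -
  have "g \<bullet> (x - u) \<le> f x - f u"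
    by (rule convex_on_imp_above_tangent_has_derivative[OF convex u x deriv])
  then have "f u - f x \<le> c \<bullet> (u - x) + (g - c) \<bullet> (u - x)"
    by (simp add: inner_diff_left inner_diff_right)
  also have "(g - c) \<bullet> (u - x) \<le> \<beta> * D"
    using norm_cauchy_schwarz[of "g - c" "u - x"] mult_mono[OF g ux] norm_ge_zero[of "g - c"] g
    by simp
  finally show ?thesis
    by (simp add: mult.commute)
qed

lemma has_derivative_emp_obj:
  fixes loss :: "'a::real_inner \<Rightarrow> 'z \<Rightarrow> real"
  assumes grad: "\<And>w z. ((\<lambda>v. loss v z) has_derivative (\<lambda>h. grad w z \<bullet> h)) (at w)"
  shows "(emp_obj loss n Z has_derivative (\<lambda>h. ((1 / real n) *\<^sub>R (\<Sum>i<n. grad u (Z i))) \<bullet> h)) (at u)"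
proof -
  have "((\<lambda>v. (1 / real n) * (\<Sum>i<n. loss v (Z i))) has_derivative
      (\<lambda>h. (1 / real n) * (\<Sum>i<n. grad u (Z i) \<bullet> h))) (at u)"
    by (intro has_derivative_mult_right has_derivative_sum grad)
  then show ?thesis
    by (simp add: emp_obj_def[abs_def] inner_sum_left)
qed

lemma descent_quadratic_nonneg:
  fixes x c :: "'a::real_inner"
  assumes "norm c \<le> \<tau>"
  shows "0 \<le> (norm x)\<^sup>2 - 2 * \<eta> * (c \<bullet> x) + \<eta>\<^sup>2 * \<tau>\<^sup>2"
proof -
  have "0 \<le> (norm (x - \<eta> *\<^sub>R c))\<^sup>2"
    by simp
  also have "\<dots> = (norm x)\<^sup>2 - 2 * \<eta> * (c \<bullet> x) + \<eta>\<^sup>2 * (norm c)\<^sup>2"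
    unfolding power2_norm_eq_inner
    by (simp add: inner_diff_left inner_diff_right inner_commute power2_eq_square algebra_simps)
  also have "\<dots> \<le> (norm x)\<^sup>2 - 2 * \<eta> * (c \<bullet> x) + \<eta>\<^sup>2 * \<tau>\<^sup>2"
    using assms by (simp add: mult_left_mono power_mono)
  finally show ?thesis .
qed

lemma average_le_of_telescoping:
  fixes a E :: "nat \<Rightarrow> real"
  assumes step: "\<And>t. t < T \<Longrightarrow> 2 * \<eta> * a t \<le> E t - E (Suc t) + K"
    and \<eta>: "0 < \<eta>" and T: "0 < T" and E0: "E 0 \<le> R" and ET: "0 \<le> E T"
  shows "(1 / real T) * (\<Sum>t<T. a t) \<le> R / (2 * \<eta> * real T) + K / (2 * \<eta>)"
proof -
  have "2 * \<eta> * (\<Sum>t<T. a t) \<le> (\<Sum>t<T. E t - E (Suc t) + K)"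
    unfolding sum_distrib_left by (intro sum_mono step) simp
  also have "\<dots> = E 0 - E T + real T * K"
    by (simp add: sum.distrib sum_lessThan_telescope')
  also have "\<dots> \<le> R + real T * K"
    using E0 ET by simp
  finally have "(\<Sum>t<T. a t) \<le> (R + real T * K) / (2 * \<eta>)"
    using \<eta> by (simp add: field_simps)
  then show ?thesis
    using \<eta> T by (simp add: field_simps)
qed

lemma norm_closest_point_diff_le:
  assumes "convex S" "closed S" "y \<in> S"
  shows "norm (closest_point S x - y) \<le> norm (x - y)"
  using closest_point_lipschitz[OF assms(1,2), of x y] closest_point_self[OF assms(3)] assms(3)
  by (auto simp: dist_norm)

section \<open>Clipping\<close>

lemma borel_measurable_clip [measurable]:
  "(\<lambda>z::'v::{real_normed_vector, second_countable_topology}. clip z c) \<in> borel_measurable borel"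
  unfolding clip_def by measurable

lemma norm_clip_le:
  assumes "0 \<le> c"
  shows "norm (clip z c) \<le> c"
proof (cases "c \<le> norm z")
  case True
  then show ?thesis
    using assms by (cases "z = 0") (auto simp: clip_def min_def field_simps)
qed (auto simp: clip_def min_def)

lemma clip_eq_self:
  assumes "norm z \<le> c"
  shows "clip z c = z"
  using assms by (cases "z = 0") (auto simp: clip_def min_def field_simps)

lemma norm_diff_clip_le:
  fixes z :: "'v::real_normed_vector"
  assumes c: "0 < c" and k: "1 \<le> k"
  shows "norm (z - clip z c) \<le> norm z powr k / c powr (k - 1)"
proof (cases "norm z \<le> c")
  case True
  then show ?thesis
    by (simp add: clip_eq_self)
next
  case False
  then have z: "c < norm z"
    by simp
  then have z0: "0 < norm z"
    using c by linarith
  have "min 1 (c / norm z) = c / norm z"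
    using z z0 by (simp add: min_def field_simps)
  then have "z - clip z c = (1 - c / norm z) *\<^sub>R z"
    by (simp add: clip_def algebra_simps)
  moreover have "\<bar>1 - c / norm z\<bar> * norm z = norm z - c"
    using z z0 by (simp add: abs_of_nonneg field_simps)
  ultimately have "norm (z - clip z c) = norm z - c"
    by simp
  also have "\<dots> \<le> norm z powr k / norm z powr (k - 1)"
    using z c by (simp add: powr_diff)
  also have "\<dots> \<le> norm z powr k / c powr (k - 1)"
    using z c k by (intro divide_left_mono powr_mono2 mult_pos_pos) auto
  finally show ?thesis .
qed

lemma norm_mean_clip_le:
  assumes "0 \<le> c"
  shows "norm ((1 / real n) *\<^sub>R (\<Sum>i<n. clip (g i) c)) \<le> c"
proof -
  have "norm (\<Sum>i<n. clip (g i) c) \<le> (\<Sum>i<n. norm (clip (g i) c))"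
    by (rule norm_sum)
  also have "\<dots> \<le> (\<Sum>i<n. c)"
    by (intro sum_mono norm_clip_le assms)
  finally show ?thesis
    using assms by (cases "n = 0") (auto simp: field_simps)
qed

lemma mean_clipping_bias_le:
  fixes g :: "nat \<Rightarrow> 'v::real_normed_vector"
  assumes c: "0 < c" and k: "1 \<le> k" and g: "\<And>i. i < n \<Longrightarrow> norm (g i) \<le> G i"
    and moment: "(1 / real n) * (\<Sum>i<n. G i powr k) \<le> M"
  shows "(1 / real n) * (\<Sum>i<n. norm (g i - clip (g i) c)) \<le> M / c powr (k - 1)"
proof -
  have "(\<Sum>i<n. norm (g i - clip (g i) c)) \<le> (\<Sum>i<n. G i powr k / c powr (k - 1))"
  proof (rule sum_mono)
    fix i assume "i \<in> {..<n}"
    then have "norm (g i) powr k / c powr (k - 1) \<le> G i powr k / c powr (k - 1)"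
      using g k by (intro divide_right_mono powr_mono2) auto
    then show "norm (g i - clip (g i) c) \<le> G i powr k / c powr (k - 1)"
      using norm_diff_clip_le[OF c k, of "g i"] by simp
  qed
  then have "(1 / real n) * (\<Sum>i<n. norm (g i - clip (g i) c))
      \<le> (1 / real n) * ((\<Sum>i<n. G i powr k) / c powr (k - 1))"
    unfolding sum_divide_distrib by (rule mult_left_mono) simp
  also have "\<dots> \<le> M / c powr (k - 1)"
    using divide_right_mono[OF moment, of "c powr (k - 1)"] by simp
  finally show ?thesis .
qed

section \<open>Product measures\<close>

lemma nn_integral_pair_PiM_split:
  fixes B :: "'i \<Rightarrow> 'a measure" and N :: "'j \<Rightarrow> 'b measure"
  assumes B: "\<And>i. prob_space (B i)" and N: "\<And>j. prob_space (N j)"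
    and K1: "finite K1" "finite J1" "K1 \<inter> J1 = {}"
    and K2: "finite K2" "finite J2" "K2 \<inter> J2 = {}"
    and F[measurable]: "F \<in> borel_measurable (PiM (K1 \<union> J1) B \<Otimes>\<^sub>M PiM (K2 \<union> J2) N)"
  shows "(\<integral>\<^sup>+\<omega>. F \<omega> \<partial>(PiM (K1 \<union> J1) B \<Otimes>\<^sub>M PiM (K2 \<union> J2) N)) =
    (\<integral>\<^sup>+x1. \<integral>\<^sup>+x2. \<integral>\<^sup>+y1. \<integral>\<^sup>+y2. F (merge K1 J1 (x1, y1), merge K2 J2 (x2, y2))
        \<partial>PiM J2 N \<partial>PiM J1 B \<partial>PiM K2 N \<partial>PiM K1 B)"
proof -
  interpret B: product_sigma_finite B
    by (simp add: B product_sigma_finite_def prob_space_imp_sigma_finite)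
  interpret N: product_sigma_finite N
    by (simp add: N product_sigma_finite_def prob_space_imp_sigma_finite)
  interpret N12: prob_space "PiM (K2 \<union> J2) N"
    by (rule prob_space_PiM) (simp add: N)
  interpret J2: prob_space "PiM J2 N"
    by (rule prob_space_PiM) (simp add: N)
  interpret J1K2: pair_sigma_finite "PiM J1 B" "PiM K2 N"
    by (intro pair_sigma_finite.intro prob_space_imp_sigma_finite prob_space_PiM B N)
  have "(\<integral>\<^sup>+\<omega>. F \<omega> \<partial>(PiM (K1 \<union> J1) B \<Otimes>\<^sub>M PiM (K2 \<union> J2) N)) =
     (\<integral>\<^sup>+\<omega>1. \<integral>\<^sup>+\<omega>2. F (\<omega>1, \<omega>2) \<partial>PiM (K2 \<union> J2) N \<partial>PiM (K1 \<union> J1) B)"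
    by (rule N12.nn_integral_fst[symmetric]) measurable
  also have "\<dots> = (\<integral>\<^sup>+x1. \<integral>\<^sup>+y1. \<integral>\<^sup>+\<omega>2. F (merge K1 J1 (x1, y1), \<omega>2)
      \<partial>PiM (K2 \<union> J2) N \<partial>PiM J1 B \<partial>PiM K1 B)"
    by (rule B.product_nn_integral_fold) (use K1 in auto)
  also have "\<dots> = (\<integral>\<^sup>+x1. \<integral>\<^sup>+y1. \<integral>\<^sup>+x2. \<integral>\<^sup>+y2. F (merge K1 J1 (x1, y1), merge K2 J2 (x2, y2))
        \<partial>PiM J2 N \<partial>PiM K2 N \<partial>PiM J1 B \<partial>PiM K1 B)"
  proof (intro nn_integral_cong)
    fix x1 y1 assume x1: "x1 \<in> space (PiM K1 B)" and y1: "y1 \<in> space (PiM J1 B)"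
    have "merge K1 J1 (x1, y1) \<in> space (PiM (K1 \<union> J1) B)"
      by (rule measurable_space[OF measurable_merge]) (simp add: space_pair_measure x1 y1)
    then show "(\<integral>\<^sup>+\<omega>2. F (merge K1 J1 (x1, y1), \<omega>2) \<partial>PiM (K2 \<union> J2) N) =
        (\<integral>\<^sup>+x2. \<integral>\<^sup>+y2. F (merge K1 J1 (x1, y1), merge K2 J2 (x2, y2)) \<partial>PiM J2 N \<partial>PiM K2 N)"
      by (intro N.product_nn_integral_fold K2) measurable
  qed
  also have "\<dots> = (\<integral>\<^sup>+x1. \<integral>\<^sup>+x2. \<integral>\<^sup>+y1. \<integral>\<^sup>+y2. F (merge K1 J1 (x1, y1), merge K2 J2 (x2, y2))
        \<partial>PiM J2 N \<partial>PiM J1 B \<partial>PiM K2 N \<partial>PiM K1 B)"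
  proof (intro nn_integral_cong)
    fix x1 assume "x1 \<in> space (PiM K1 B)"
    then show "(\<integral>\<^sup>+y1. \<integral>\<^sup>+x2. \<integral>\<^sup>+y2. F (merge K1 J1 (x1, y1), merge K2 J2 (x2, y2))
        \<partial>PiM J2 N \<partial>PiM K2 N \<partial>PiM J1 B) =
      (\<integral>\<^sup>+x2. \<integral>\<^sup>+y1. \<integral>\<^sup>+y2. F (merge K1 J1 (x1, y1), merge K2 J2 (x2, y2))
        \<partial>PiM J2 N \<partial>PiM J1 B \<partial>PiM K2 N)"
      by (intro J1K2.Fubini'[symmetric]) measurable
  qed
  finally show ?thesis .
qed

lemma integral_PiM_component:
  fixes f :: "'a \<Rightarrow> real"
  assumes M: "\<And>i. i \<in> I \<Longrightarrow> prob_space (M i)" and i: "i \<in> I"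
    and f: "f \<in> borel_measurable (M i)" "integrable (M i) f"
  shows "integrable (PiM I M) (\<lambda>x. f (x i))" "(\<integral>x. f (x i) \<partial>PiM I M) = integral\<^sup>L (M i) f"
proof -
  have comp: "(\<lambda>x. x i) \<in> measurable (PiM I M) (M i)"
    using i by (rule measurable_component_singleton)
  have distr: "distr (PiM I M) (M i) (\<lambda>x. x i) = M i"
    by (rule distr_PiM_component[OF M i])
  show "integrable (PiM I M) (\<lambda>x. f (x i))"
    using integrable_distr_eq[OF comp f(1)] f(2) distr by simp
  show "(\<integral>x. f (x i) \<partial>PiM I M) = integral\<^sup>L (M i) f"
    using integral_distr[OF comp f(1)] distr by simp
qed

lemma sample_mean_less_event:
  fixes h :: "'z \<Rightarrow> real" and P :: "'z \<Rightarrow> bool"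
  assumes M: "prob_space M" and h: "h \<in> borel_measurable M" "integrable M h" "\<And>z. 0 \<le> h z"
    and c: "0 < c" and n: "0 < n" and P: "AE z in M. P z"
  shows "\<exists>A \<in> sets (PiM {0..<n} (\<lambda>_. M)). 1 - (\<integral>z. h z \<partial>M) / c \<le> measure (PiM {0..<n} (\<lambda>_. M)) A \<and>
    (\<forall>Z\<in>A. Z \<in> space (PiM {0..<n} (\<lambda>_. M)) \<and> (1 / real n) * (\<Sum>i<n. h (Z i)) < c \<and> (\<forall>i<n. P (Z i)))"
proof -
  let ?M = "PiM {0..<n} (\<lambda>_. M)"
  interpret M: prob_space ?M
    by (rule prob_space_PiM) (rule M)
  define Y where "Y Z = (1 / real n) * (\<Sum>i<n. h (Z i))" for Z :: "nat \<Rightarrow> 'z"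
  have comp_int: "integrable ?M (\<lambda>Z. h (Z i))" and comp_mean: "(\<integral>Z. h (Z i) \<partial>?M) = (\<integral>z. h z \<partial>M)"
    if "i < n" for i
    using integral_PiM_component[of "{0..<n}" "\<lambda>_. M" i h, OF M _ h(1,2)] that by auto
  have Y_int: "integrable ?M Y"
    unfolding Y_def by (intro integrable_mult_right Bochner_Integration.integrable_sum comp_int) simp
  have Y_mean: "(\<integral>Z. Y Z \<partial>?M) = (\<integral>z. h z \<partial>M)"
    unfolding Y_def using n by (simp add: Bochner_Integration.integral_sum comp_int comp_mean)
  from Y_int have [measurable]: "Y \<in> borel_measurable ?M"
    by (rule borel_measurable_integrable)
  have "AE Z in ?M. 0 \<le> Y Z"
    by (simp add: Y_def h(3) sum_nonneg)
  from integral_Markov_inequality_measure[OF Y_int sets.top this c]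
  have markov: "measure ?M {Z \<in> space ?M. c \<le> Y Z} \<le> (\<integral>z. h z \<partial>M) / c"
    unfolding Y_mean .
  have "AE Z in ?M. \<forall>i\<in>{0..<n}. P (Z i)"
    by (rule AE_finite_allI) (auto intro!: AE_PiM_component M P)
  then obtain N where N: "{Z \<in> space ?M. \<not> (\<forall>i\<in>{0..<n}. P (Z i))} \<subseteq> N" "N \<in> null_sets ?M"
    by (auto elim!: AE_E)
  define A where "A = space ?M - {Z \<in> space ?M. c \<le> Y Z} - N"
  have [measurable]: "N \<in> sets ?M"
    using N(2) by auto
  have A: "A \<in> sets ?M"
    unfolding A_def by measurable
  have "1 - (\<integral>z. h z \<partial>M) / c \<le> 1 - measure ?M {Z \<in> space ?M. c \<le> Y Z}"
    using markov by simp
  also have "\<dots> = measure ?M (space ?M - {Z \<in> space ?M. c \<le> Y Z})"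
    by (rule M.prob_compl[symmetric]) measurable
  also have "\<dots> = measure ?M A"
    unfolding A_def by (rule measure_Diff_null_set[symmetric, OF _ N(2)]) measurable
  finally have "1 - (\<integral>z. h z \<partial>M) / c \<le> measure ?M A" .
  moreover have "P (Z i)" if "Z \<in> A" "i < n" for Z i
    using that N(1) unfolding A_def by fastforce
  ultimately show ?thesis
    using A by (intro bexI[of _ A]) (auto simp: A_def Y_def not_le)
qed

lemma normal_density_centered_moments:
  assumes \<sigma>: "0 < \<sigma>"
  shows "integrable (density lborel (normal_density 0 \<sigma>)) (\<lambda>x. x)"
    "(\<integral>x. x \<partial>density lborel (normal_density 0 \<sigma>)) = 0"
    "integrable (density lborel (normal_density 0 \<sigma>)) (\<lambda>x. x\<^sup>2)"
    "(\<integral>x. x\<^sup>2 \<partial>density lborel (normal_density 0 \<sigma>)) = \<sigma>\<^sup>2"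
proof -
  show "integrable (density lborel (normal_density 0 \<sigma>)) (\<lambda>x. x)"
    by (subst integrable_density) (use integrable_normal_moment_nz_1[OF \<sigma>, of 0] in auto)
  show "(\<integral>x. x \<partial>density lborel (normal_density 0 \<sigma>)) = 0"
    by (subst integral_density) (use integral_normal_moment_nz_1[OF \<sigma>, of 0] in auto)
  show "integrable (density lborel (normal_density 0 \<sigma>)) (\<lambda>x. x\<^sup>2)"
    by (subst integrable_density) (use \<sigma> integrable_normal_moment[where \<mu>=0 and \<sigma>=\<sigma> and k=2] in auto)
  show "(\<integral>x. x\<^sup>2 \<partial>density lborel (normal_density 0 \<sigma>)) = \<sigma>\<^sup>2"
    by (subst integral_density)
      (use integral_normal_moment_even[OF \<sigma>, of 0 1] \<sigma> in \<open>auto simp: power2_eq_square\<close>)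
qed

lemma nn_integral_gaussian_perturbation:
  fixes r :: "real^'d::finite"
  assumes \<sigma>: "0 < \<sigma>"
  shows "(\<integral>\<^sup>+\<xi>. ennreal ((norm (r - \<eta> *\<^sub>R (\<chi> j. \<xi> (t, j))))\<^sup>2)
            \<partial>PiM ({t} \<times> (UNIV :: 'd set)) (\<lambda>_. density lborel (normal_density 0 \<sigma>)))
         = ennreal ((norm r)\<^sup>2 + \<eta>\<^sup>2 * real CARD('d) * \<sigma>\<^sup>2)"
proof -
  let ?N = "PiM ({t} \<times> (UNIV :: 'd set)) (\<lambda>_. density lborel (normal_density 0 \<sigma>))"
  have P: "prob_space (density lborel (normal_density 0 \<sigma>))"
    by (simp add: prob_space_normal_density \<sigma>)
  interpret N: prob_space ?N
    by (rule prob_space_PiM) (simp add: P)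
  have j: "(t, j) \<in> {t} \<times> (UNIV :: 'd set)" for j
    by simp
  note moments = normal_density_centered_moments[OF \<sigma>]
  note first = integral_PiM_component[OF P j _ moments(1)]
  note second = integral_PiM_component[OF P j _ moments(3)]
  have expand: "(norm (r - \<eta> *\<^sub>R (\<chi> j. \<xi> (t, j))))\<^sup>2 =
     (norm r)\<^sup>2 + (\<Sum>j\<in>UNIV. \<eta>\<^sup>2 * (\<xi> (t, j))\<^sup>2 - 2 * \<eta> * r $ j * \<xi> (t, j))" for \<xi>
    unfolding power2_norm_eq_inner inner_vec_def
    by (simp add: sum.distrib[symmetric] sum_subtractf[symmetric] power2_eq_square algebra_simps)
  have "integrable ?N (\<lambda>\<xi>. (norm (r - \<eta> *\<^sub>R (\<chi> j. \<xi> (t, j))))\<^sup>2)"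
    unfolding expand using first(1) second(1) by simp
  then have "(\<integral>\<^sup>+\<xi>. ennreal ((norm (r - \<eta> *\<^sub>R (\<chi> j. \<xi> (t, j))))\<^sup>2) \<partial>?N)
      = ennreal (\<integral>\<xi>. (norm (r - \<eta> *\<^sub>R (\<chi> j. \<xi> (t, j))))\<^sup>2 \<partial>?N)"
    by (rule nn_integral_eq_integral) simp
  also have "(\<integral>\<xi>. (norm (r - \<eta> *\<^sub>R (\<chi> j. \<xi> (t, j))))\<^sup>2 \<partial>?N) = (norm r)\<^sup>2 + \<eta>\<^sup>2 * real CARD('d) * \<sigma>\<^sup>2"
    unfolding expand using first second by (simp add: moments N.prob_space)
  finally show ?thesis .
qed

lemma bernoulli_PiM_indicator_moments:
  fixes p :: real
  assumes p: "0 \<le> p" "p \<le> 1" and I: "finite I" and i: "i \<in> I" and l: "l \<in> I"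
  defines "B \<equiv> PiM I (\<lambda>_. measure_pmf (bernoulli_pmf p))"
  shows "integrable B (\<lambda>\<beta>. of_bool (\<beta> i) :: real)"
    "(\<integral>\<beta>. of_bool (\<beta> i) \<partial>B) = p"
    "integrable B (\<lambda>\<beta>. of_bool (\<beta> i) * of_bool (\<beta> l) :: real)"
    "(\<integral>\<beta>. of_bool (\<beta> i) * of_bool (\<beta> l) \<partial>B) = (if i = l then p else p\<^sup>2)"
proof -
  have P: "prob_space (measure_pmf (bernoulli_pmf p))"
    by (rule prob_space_measure_pmf)
  interpret B: prob_space B
    unfolding B_def by (rule prob_space_PiM) (simp add: P)
  interpret product: product_sigma_finite "\<lambda>_. measure_pmf (bernoulli_pmf p)"
    by (simp add: product_sigma_finite_def prob_space_imp_sigma_finite P)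
  have [measurable]: "(\<lambda>\<beta>. \<beta> j) \<in> measurable B (count_space UNIV)" if "j \<in> I" for j
    using measurable_component_singleton[OF that, of "\<lambda>_. measure_pmf (bernoulli_pmf p)"]
    unfolding B_def by simp
  have bounded: "integrable B f" if "f \<in> borel_measurable B" "\<And>\<beta>. \<bar>f \<beta>\<bar> \<le> 1" for f :: "_ \<Rightarrow> real"
    by (rule B.integrable_const_bound[where B=1]) (use that in auto)
  show "integrable B (\<lambda>\<beta>. of_bool (\<beta> i) :: real)"
    using i by (intro bounded) auto
  show "integrable B (\<lambda>\<beta>. of_bool (\<beta> i) * of_bool (\<beta> l) :: real)"
    using i l by (intro bounded) auto
  have pmf_integral: "(\<integral>x. f x \<partial>measure_pmf (bernoulli_pmf p)) = p * f True + (1 - p) * f False" for f :: "bool \<Rightarrow> real"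
    using p by (subst integral_measure_pmf[where A=UNIV]) (auto simp: UNIV_bool)
  show first: "(\<integral>\<beta>. of_bool (\<beta> i) \<partial>B) = p"
    unfolding B_def
    by (subst integral_PiM_component(2)[OF P i]) (auto simp: pmf_integral intro!: measure_pmf.integrable_const_bound[where B=1])
  show "(\<integral>\<beta>. of_bool (\<beta> i) * of_bool (\<beta> l) \<partial>B) = (if i = l then p else p\<^sup>2)"
  proof (cases "i = l")
    case True
    then have "(\<lambda>\<beta>. of_bool (\<beta> i) * of_bool (\<beta> l) :: real) = (\<lambda>\<beta>. of_bool (\<beta> i))"
      by (simp add: fun_eq_iff)
    then show ?thesis
      using first True by simp
  next
    case False
    define f where "f j x = (if j = i \<or> j = l then of_bool x else 1 :: real)" for j x
    have "(\<Prod>j\<in>I. f j (\<beta> j)) = f i (\<beta> i) * f l (\<beta> l)" for \<beta>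
      using False i l I by (subst prod.mono_neutral_right[of I "{i, l}"]) (auto simp: f_def)
    then have "(\<integral>\<beta>. of_bool (\<beta> i) * of_bool (\<beta> l) \<partial>B) = (\<integral>\<beta>. (\<Prod>j\<in>I. f j (\<beta> j)) \<partial>B)"
      by (simp add: f_def)
    also have "\<dots> = (\<Prod>j\<in>I. \<integral>x. f j x \<partial>measure_pmf (bernoulli_pmf p))"
      unfolding B_def using I
      by (intro product.product_integral_prod) (auto intro!: measure_pmf.integrable_const_bound[where B=1] simp: f_def)
    also have "\<dots> = p\<^sup>2"
      using False i l I by (subst prod.mono_neutral_right[of I "{i, l}"])
        (auto simp: f_def pmf_integral power2_eq_square)
    finally show ?thesis
      using False by simp
  qed
qed

lemma subsample_second_moment_le:
  fixes a :: "nat \<Rightarrow> 'a::real_inner"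
  assumes b: "1 \<le> b" "b \<le> real n" and a: "\<And>i. i < n \<Longrightarrow> norm (a i) \<le> \<tau>"
  defines "p \<equiv> b / real n"
  shows "(\<Sum>i<n. \<Sum>l<n. (if i = l then p else p\<^sup>2) * (a i \<bullet> a l)) \<le> 2 * b\<^sup>2 * \<tau>\<^sup>2"
proof -
  have n: "0 < real n"
    using b by simp
  have p: "0 \<le> p" "p \<le> 1"
    using b n by (auto simp: p_def)
  have "(\<Sum>i<n. \<Sum>l<n. (if i = l then p else p\<^sup>2) * (a i \<bullet> a l))
      = (\<Sum>i<n. \<Sum>l<n. p\<^sup>2 * (a i \<bullet> a l)) + (\<Sum>i<n. \<Sum>l<n. if i = l then (p - p\<^sup>2) * (a i \<bullet> a l) else 0)"
    unfolding sum.distrib[symmetric] by (auto intro!: sum.cong simp: algebra_simps)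
  also have "(\<Sum>i<n. \<Sum>l<n. p\<^sup>2 * (a i \<bullet> a l)) = p\<^sup>2 * (norm (\<Sum>i<n. a i))\<^sup>2"
    by (simp add: power2_norm_eq_inner inner_sum_left inner_sum_right sum_distrib_left) (rule sum.swap)
  also have "(\<Sum>i<n. \<Sum>l<n. if i = l then (p - p\<^sup>2) * (a i \<bullet> a l) else 0) = (p - p\<^sup>2) * (\<Sum>i<n. (norm (a i))\<^sup>2)"
    by (simp add: power2_norm_eq_inner sum_distrib_left)
  also have "p\<^sup>2 * (norm (\<Sum>i<n. a i))\<^sup>2 + (p - p\<^sup>2) * (\<Sum>i<n. (norm (a i))\<^sup>2)
      \<le> p\<^sup>2 * (real n * \<tau>)\<^sup>2 + p * (real n * \<tau>\<^sup>2)"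
  proof (rule add_mono)
    have "norm (\<Sum>i<n. a i) \<le> real n * \<tau>"
      using norm_sum[of a "{..<n}"] sum_mono[of "{..<n}" "\<lambda>i. norm (a i)" "\<lambda>_. \<tau>"] a by simp
    then show "p\<^sup>2 * (norm (\<Sum>i<n. a i))\<^sup>2 \<le> p\<^sup>2 * (real n * \<tau>)\<^sup>2"
      by (intro mult_left_mono power_mono) auto
    have "(\<Sum>i<n. (norm (a i))\<^sup>2) \<le> real n * \<tau>\<^sup>2"
      using sum_mono[of "{..<n}" "\<lambda>i. (norm (a i))\<^sup>2" "\<lambda>_. \<tau>\<^sup>2"] a by (simp add: power_mono)
    then show "(p - p\<^sup>2) * (\<Sum>i<n. (norm (a i))\<^sup>2) \<le> p * (real n * \<tau>\<^sup>2)"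
      using p by (intro mult_mono) (auto simp: sum_nonneg)
  qed
  also have "\<dots> = b\<^sup>2 * \<tau>\<^sup>2 + b * \<tau>\<^sup>2"
    using n by (simp add: p_def power2_eq_square field_simps)
  also have "\<dots> \<le> 2 * b\<^sup>2 * \<tau>\<^sup>2"
    using mult_right_mono[of b "b\<^sup>2" "\<tau>\<^sup>2"] b by (simp add: power2_eq_square mult_le_cancel_left1 mult_ac)
  finally show ?thesis .
qed

lemma bernoulli_PiM_sum_moments:
  fixes x :: "nat \<Rightarrow> real" and y :: "nat \<Rightarrow> nat \<Rightarrow> real" and t :: 'i and n :: nat
  assumes p: "0 \<le> p" "p \<le> 1"
  defines "B \<equiv> PiM ({t} \<times> {0..<n}) (\<lambda>_. measure_pmf (bernoulli_pmf p))"
  shows "integrable B (\<lambda>\<beta>. \<Sum>i<n. of_bool (\<beta> (t, i)) * x i)"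
    "(\<integral>\<beta>. (\<Sum>i<n. of_bool (\<beta> (t, i)) * x i) \<partial>B) = p * (\<Sum>i<n. x i)"
    "integrable B (\<lambda>\<beta>. \<Sum>i<n. \<Sum>l<n. of_bool (\<beta> (t, i)) * of_bool (\<beta> (t, l)) * y i l)"
    "(\<integral>\<beta>. (\<Sum>i<n. \<Sum>l<n. of_bool (\<beta> (t, i)) * of_bool (\<beta> (t, l)) * y i l) \<partial>B)
      = (\<Sum>i<n. \<Sum>l<n. (if i = l then p else p\<^sup>2) * y i l)"
proof -
  have fin: "finite ({t} \<times> {0..<n})"
    by simp
  have mem: "(t, i) \<in> {t} \<times> {0..<n}" if "i < n" for i
    using that by simp
  note moments = bernoulli_PiM_indicator_moments[OF p fin mem mem, folded B_def]
  show "integrable B (\<lambda>\<beta>. \<Sum>i<n. of_bool (\<beta> (t, i)) * x i)"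
    "integrable B (\<lambda>\<beta>. \<Sum>i<n. \<Sum>l<n. of_bool (\<beta> (t, i)) * of_bool (\<beta> (t, l)) * y i l)"
    by (intro Bochner_Integration.integrable_sum integrable_mult_left moments(1,3); simp)+
  show "(\<integral>\<beta>. (\<Sum>i<n. of_bool (\<beta> (t, i)) * x i) \<partial>B) = p * (\<Sum>i<n. x i)"
    by (subst Bochner_Integration.integral_sum) (auto simp: moments sum_distrib_left)
  show "(\<integral>\<beta>. (\<Sum>i<n. \<Sum>l<n. of_bool (\<beta> (t, i)) * of_bool (\<beta> (t, l)) * y i l) \<partial>B)
      = (\<Sum>i<n. \<Sum>l<n. (if i = l then p else p\<^sup>2) * y i l)"
    by (subst Bochner_Integration.integral_sum, simp add: moments)+ (auto simp: moments intro!: sum.cong)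
qed

lemma nn_integral_subsample_step_le:
  fixes a :: "nat \<Rightarrow> 'a::real_inner"
  assumes b: "1 \<le> b" "b \<le> real n" and a: "\<And>i. i < n \<Longrightarrow> norm (a i) \<le> \<tau>" and K: "0 \<le> K"
  shows "(\<integral>\<^sup>+\<beta>. ennreal ((norm (v - \<eta> *\<^sub>R ((1 / b) *\<^sub>R (\<Sum>i<n. if \<beta> (t, i) then a i else 0))))\<^sup>2 + K)
            \<partial>PiM ({t} \<times> {0..<n}) (\<lambda>_. measure_pmf (bernoulli_pmf (b / real n))))
     \<le> ennreal ((norm v)\<^sup>2 - 2 * \<eta> * (v \<bullet> ((1 / real n) *\<^sub>R (\<Sum>i<n. a i))) + 2 * \<eta>\<^sup>2 * \<tau>\<^sup>2 + K)"
proof -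
  define p where "p = b / real n"
  define B where "B = PiM ({t} \<times> {0..<n}) (\<lambda>_. measure_pmf (bernoulli_pmf p))"
  define L where "L \<beta> = (\<Sum>i<n. of_bool (\<beta> (t, i)) * (v \<bullet> a i))" for \<beta>
  define S where "S \<beta> = (\<Sum>i<n. \<Sum>l<n. of_bool (\<beta> (t, i)) * of_bool (\<beta> (t, l)) * (a i \<bullet> a l))" for \<beta>
  have p: "0 \<le> p" "p \<le> 1"
    using b by (auto simp: p_def)
  interpret B: prob_space B
    unfolding B_def by (rule prob_space_PiM) (simp add: prob_space_measure_pmf)
  note moments = bernoulli_PiM_sum_moments(1,2)[OF p, where t=t and n=n and x="\<lambda>i. v \<bullet> a i"]
    bernoulli_PiM_sum_moments(3,4)[OF p, where t=t and n=n and y="\<lambda>i l. a i \<bullet> a l"]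
  note moments = moments[folded B_def L_def S_def]
  have expand: "(norm (v - \<eta> *\<^sub>R ((1 / b) *\<^sub>R (\<Sum>i<n. if \<beta> (t, i) then a i else 0))))\<^sup>2 + K
      = (norm v)\<^sup>2 - 2 * (\<eta> / b) * L \<beta> + (\<eta> / b)\<^sup>2 * S \<beta> + K" for \<beta>
  proof -
    have "(\<Sum>i<n. if \<beta> (t, i) then a i else 0) = (\<Sum>i<n. of_bool (\<beta> (t, i)) *\<^sub>R a i)"
      by (intro sum.cong) auto
    then show ?thesis
      unfolding L_def S_def power2_norm_eq_inner
      by (simp add: inner_diff_left inner_diff_right inner_sum_left inner_sum_right sum_distrib_left
          power2_eq_square algebra_simps inner_commute)
  qed
  have nonneg: "0 \<le> (norm v)\<^sup>2 - 2 * (\<eta> / b) * L \<beta> + (\<eta> / b)\<^sup>2 * S \<beta> + K" for \<beta>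
    unfolding expand[symmetric] using K by simp
  have "(\<integral>\<^sup>+\<beta>. ennreal ((norm (v - \<eta> *\<^sub>R ((1 / b) *\<^sub>R (\<Sum>i<n. if \<beta> (t, i) then a i else 0))))\<^sup>2 + K) \<partial>B)
      = ennreal (\<integral>\<beta>. (norm v)\<^sup>2 - 2 * (\<eta> / b) * L \<beta> + (\<eta> / b)\<^sup>2 * S \<beta> + K \<partial>B)"
    unfolding expand by (intro nn_integral_eq_integral AE_I2 nonneg) (simp add: moments(1,3))
  also have "\<dots> = ennreal ((norm v)\<^sup>2 - 2 * \<eta> * (v \<bullet> ((1 / real n) *\<^sub>R (\<Sum>i<n. a i)))
        + (\<eta> / b)\<^sup>2 * (\<Sum>i<n. \<Sum>l<n. (if i = l then p else p\<^sup>2) * (a i \<bullet> a l)) + K)"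
    using moments b by (simp add: B.prob_space p_def inner_sum_right mult.assoc)
  also have "\<dots> \<le> ennreal ((norm v)\<^sup>2 - 2 * \<eta> * (v \<bullet> ((1 / real n) *\<^sub>R (\<Sum>i<n. a i))) + 2 * \<eta>\<^sup>2 * \<tau>\<^sup>2 + K)"
  proof (intro ennreal_leI add_mono order_refl)
    have "(\<eta> / b)\<^sup>2 * (\<Sum>i<n. \<Sum>l<n. (if i = l then p else p\<^sup>2) * (a i \<bullet> a l)) \<le> (\<eta> / b)\<^sup>2 * (2 * b\<^sup>2 * \<tau>\<^sup>2)"
      unfolding p_def using subsample_second_moment_le[OF b a] by (intro mult_left_mono) auto
    also have "\<dots> = 2 * \<eta>\<^sup>2 * \<tau>\<^sup>2"
      using b by (simp add: field_simps)
    finally show "(\<eta> / b)\<^sup>2 * (\<Sum>i<n. \<Sum>l<n. (if i = l then p else p\<^sup>2) * (a i \<bullet> a l)) \<le> 2 * \<eta>\<^sup>2 * \<tau>\<^sup>2" .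
  qed
  finally show ?thesis
    by (simp add: B_def p_def)
qed

section \<open>One step of DP-SGD\<close>

definition dpsgd_step ::
  "(real^'d \<Rightarrow> 'z \<Rightarrow> real^'d) \<Rightarrow> nat \<Rightarrow> (nat \<Rightarrow> 'z) \<Rightarrow> real \<Rightarrow> real \<Rightarrow> real
   \<Rightarrow> real^'d \<Rightarrow> (nat \<Rightarrow> bool) \<Rightarrow> ('d::finite \<Rightarrow> real) \<Rightarrow> real^'d" where
  "dpsgd_step grad n Z \<eta> b \<tau> u \<beta> \<xi> =
     u - \<eta> *\<^sub>R ((1 / b) *\<^sub>R (\<Sum>i<n. if \<beta> i then clip (grad u (Z i)) \<tau> else 0) + (\<chi> j. \<xi> j))"

definition mean_clipped_grad ::
  "(real^'d \<Rightarrow> 'z \<Rightarrow> real^'d) \<Rightarrow> nat \<Rightarrow> (nat \<Rightarrow> 'z) \<Rightarrow> real \<Rightarrow> real^'d \<Rightarrow> real^'d::finite" where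
  "mean_clipped_grad grad n Z \<tau> u = (1 / real n) *\<^sub>R (\<Sum>i<n. clip (grad u (Z i)) \<tau>)"

lemma norm_mean_clipped_grad_le: "0 \<le> \<tau> \<Longrightarrow> norm (mean_clipped_grad grad n Z \<tau> u) \<le> \<tau>"
  unfolding mean_clipped_grad_def by (rule norm_mean_clip_le)

lemma dpsgd_iter_Suc_step:
  "dpsgd_iter grad n Z W w0 \<eta> b \<tau> \<omega> (Suc t) =
     closest_point W (dpsgd_step grad n Z (\<eta> t) b \<tau> (dpsgd_iter grad n Z W w0 \<eta> b \<tau> \<omega> t)
       (\<lambda>i. fst \<omega> (t, i)) (\<lambda>j. snd \<omega> (t, j)))"
proof -
  have "(\<Sum>i | i < n \<and> fst \<omega> (t, i). g i) = (\<Sum>i<n. if fst \<omega> (t, i) then g i else 0)" for g :: "nat \<Rightarrow> real^'a"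
    using sum.inter_filter[of "{..<n}" g "\<lambda>i. fst \<omega> (t, i)"] by simp
  then show ?thesis
    by (simp add: dpsgd_step_def Let_def)
qed

lemma dpsgd_iter_in:
  assumes "closed W" "w0 \<in> W"
  shows "dpsgd_iter grad n Z W w0 \<eta> b \<tau> \<omega> t \<in> W"
  using assms by (cases t) (auto simp: Let_def intro: closest_point_in_set)

lemma dpsgd_iter_cong:
  assumes "\<And>s i. s < t \<Longrightarrow> i < n \<Longrightarrow> fst \<omega> (s, i) = fst \<omega>' (s, i)"
    and "\<And>s j. s < t \<Longrightarrow> snd \<omega> (s, j) = snd \<omega>' (s, j)"
  shows "dpsgd_iter grad n Z W w0 \<eta> b \<tau> \<omega> t = dpsgd_iter grad n Z W w0 \<eta> b \<tau> \<omega>' t"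
  using assms
proof (induction t)
  case (Suc t)
  then have IH: "dpsgd_iter grad n Z W w0 \<eta> b \<tau> \<omega> t = dpsgd_iter grad n Z W w0 \<eta> b \<tau> \<omega>' t"
    by simp
  show ?case
    unfolding dpsgd_iter_Suc_step dpsgd_step_def IH using Suc.prems by simp
qed simp

lemma prob_space_dpsgd_rand:
  "0 < \<sigma> \<Longrightarrow> prob_space (dpsgd_rand n T b \<sigma> :: ((nat \<times> nat \<Rightarrow> bool) \<times> (nat \<times> 'd::finite \<Rightarrow> real)) measure)"
  unfolding dpsgd_rand_def
  by (intro prob_space_pair prob_space_PiM) (auto simp: prob_space_measure_pmf prob_space_normal_density)

lemma measurable_dpsgd_rand_subsample [measurable]:
  assumes "t < T" "i < n"
  shows "(\<lambda>\<omega>. fst \<omega> (t, i))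
    \<in> measurable (dpsgd_rand n T b \<sigma> :: (_ \<times> (nat \<times> 'd::finite \<Rightarrow> real)) measure) (count_space UNIV)"
proof -
  have "(\<lambda>\<omega>::(_ \<times> (nat \<times> 'd \<Rightarrow> real)). fst \<omega> (t, i))
      \<in> measurable (dpsgd_rand n T b \<sigma>) (measure_pmf (bernoulli_pmf (b / real n)))"
    unfolding dpsgd_rand_def
    by (rule measurable_compose[OF measurable_fst measurable_component_singleton]) (use assms in auto)
  then show ?thesis
    by simp
qed

lemma borel_measurable_dpsgd_rand_noise [measurable]:
  assumes "t < T"
  shows "(\<lambda>\<omega>. snd \<omega> (t, j)) \<in> borel_measurable (dpsgd_rand n T b \<sigma> :: (_ \<times> (nat \<times> 'd::finite \<Rightarrow> real)) measure)"
proof -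
  have "(\<lambda>\<omega>::(_ \<times> (nat \<times> 'd \<Rightarrow> real)). snd \<omega> (t, j))
      \<in> measurable (dpsgd_rand n T b \<sigma>) (density lborel (normal_density 0 \<sigma>))"
    unfolding dpsgd_rand_def
    by (rule measurable_compose[OF measurable_snd measurable_component_singleton]) (use assms in auto)
  then show ?thesis
    by (simp cong: measurable_cong_sets)
qed

lemma borel_measurable_dpsgd_iter [measurable]:
  fixes grad :: "real^'d::finite \<Rightarrow> 'z \<Rightarrow> real^'d"
  assumes grad: "\<And>i. i < n \<Longrightarrow> (\<lambda>w. grad w (Z i)) \<in> borel_measurable borel"
    and W: "convex W" "closed W" "W \<noteq> {}" and t: "t \<le> T"
  shows "(\<lambda>\<omega>. dpsgd_iter grad n Z W w0 \<eta> b \<tau> \<omega> t)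
    \<in> borel_measurable (dpsgd_rand n T b \<sigma> :: (_ \<times> (nat \<times> 'd \<Rightarrow> real)) measure)"
  using t
proof (induction t)
  case (Suc t)
  note [measurable] = Suc.IH[OF Suc_leD[OF Suc.prems]] Suc_le_lessD[OF Suc.prems]
    measurable_compose[OF _ grad]
    borel_measurable_continuous_onI[OF continuous_on_closest_point[OF W]]
  show ?case
    unfolding dpsgd_iter_Suc_step dpsgd_step_def by measurable
qed simp

text \<open>The iterate w_t depends only on the coordinates of the steps before t
  (\<open>dpsgd_iter_cong\<close>), so after splitting off the coordinates of step t by Fubini,
  they can be integrated out with w_t frozen.\<close>
lemma nn_integral_dpsgd_iter_step_le:
  fixes grad :: "real^'d::finite \<Rightarrow> 'z \<Rightarrow> real^'d"
    and \<Phi> :: "real^'d \<Rightarrow> (nat \<Rightarrow> bool) \<Rightarrow> ('d \<Rightarrow> real) \<Rightarrow> ennreal" and H :: "real^'d \<Rightarrow> ennreal"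
    and n T :: nat and b \<sigma> \<tau> :: real and \<eta> :: "nat \<Rightarrow> real"
    and Z :: "nat \<Rightarrow> 'z" and W :: "(real^'d) set" and w0 :: "real^'d"
  defines "\<Omega> \<equiv> (dpsgd_rand n T b \<sigma> :: ((nat \<times> nat \<Rightarrow> bool) \<times> (nat \<times> 'd \<Rightarrow> real)) measure)"
    and "it \<equiv> dpsgd_iter grad n Z W w0 \<eta> b \<tau>"
  assumes t: "t < T" and \<sigma>: "0 < \<sigma>" and W: "closed W" "w0 \<in> W"
    and \<Phi>_meas: "(\<lambda>\<omega>. \<Phi> (it \<omega> t) (\<lambda>i. fst \<omega> (t, i)) (\<lambda>j. snd \<omega> (t, j))) \<in> borel_measurable \<Omega>"
    and H_meas: "(\<lambda>\<omega>. H (it \<omega> t)) \<in> borel_measurable \<Omega>"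
    and le: "\<And>u. u \<in> W \<Longrightarrow>
      (\<integral>\<^sup>+\<beta>. \<integral>\<^sup>+\<xi>. \<Phi> u (\<lambda>i. \<beta> (t, i)) (\<lambda>j. \<xi> (t, j))
         \<partial>PiM ({t} \<times> UNIV) (\<lambda>_. density lborel (normal_density 0 \<sigma>))
         \<partial>PiM ({t} \<times> {0..<n}) (\<lambda>_. measure_pmf (bernoulli_pmf (b / real n)))) \<le> H u"
  shows "(\<integral>\<^sup>+\<omega>. \<Phi> (it \<omega> t) (\<lambda>i. fst \<omega> (t, i)) (\<lambda>j. snd \<omega> (t, j)) \<partial>\<Omega>) \<le> (\<integral>\<^sup>+\<omega>. H (it \<omega> t) \<partial>\<Omega>)"
proof -
  define B where "B = (\<lambda>_::nat \<times> nat. measure_pmf (bernoulli_pmf (b / real n)))"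
  define N where "N = (\<lambda>_::nat \<times> 'd. density lborel (normal_density 0 \<sigma>))"
  define J1 where "J1 = {t} \<times> {0..<n}"
  define K1 where "K1 = {0..<T} \<times> {0..<n} - J1"
  define J2 where "J2 = {t} \<times> (UNIV :: 'd set)"
  define K2 where "K2 = {0..<T} \<times> (UNIV :: 'd set) - J2"
  have \<Omega>_eq: "\<Omega> = PiM (K1 \<union> J1) B \<Otimes>\<^sub>M PiM (K2 \<union> J2) N"
  proof -
    have "{0..<T} \<times> {0..<n} = K1 \<union> J1" "{0..<T} \<times> (UNIV :: 'd set) = K2 \<union> J2"
      using t by (auto simp: K1_def J1_def K2_def J2_def)
    then show ?thesis
      unfolding \<Omega>_def dpsgd_rand_def B_def N_def by simp
  qed
  have B: "prob_space (B i)" for i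
    by (simp add: B_def prob_space_measure_pmf)
  have N: "prob_space (N j)" for j
    by (simp add: N_def prob_space_normal_density \<sigma>)
  interpret J1: prob_space "PiM J1 B" by (rule prob_space_PiM) (simp add: B)
  interpret J2: prob_space "PiM J2 N" by (rule prob_space_PiM) (simp add: N)
  note split = nn_integral_pair_PiM_split[OF B N, of K1 J1 K2 J2]
  have fin: "finite K1" "finite J1" "K1 \<inter> J1 = {}" "finite K2" "finite J2" "K2 \<inter> J2 = {}"
    by (auto simp: K1_def J1_def K2_def J2_def)
  define U where "U x1 x2 = it (x1, x2) t" for x1 x2
  have it_merge: "it (merge K1 J1 (x1, y1), merge K2 J2 (x2, y2)) t = U x1 x2" for x1 x2 y1 y2
    unfolding U_def it_def
    by (rule dpsgd_iter_cong) (use t in \<open>auto simp: merge_def K1_def J1_def K2_def J2_def\<close>)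
  have fst_merge: "(\<lambda>i. merge K1 J1 (x1, y1) (t, i)) = (\<lambda>i. y1 (t, i))"
    if "y1 \<in> space (PiM J1 B)" for x1 y1
    using that by (auto simp: merge_def K1_def J1_def space_PiM PiE_def extensional_def fun_eq_iff)
  have snd_merge: "(\<lambda>j. merge K2 J2 (x2, y2) (t, j)) = (\<lambda>j. y2 (t, j))" for x2 y2
    by (auto simp: merge_def K2_def J2_def fun_eq_iff)
  have "(\<integral>\<^sup>+\<omega>. \<Phi> (it \<omega> t) (\<lambda>i. fst \<omega> (t, i)) (\<lambda>j. snd \<omega> (t, j)) \<partial>\<Omega>) =
    (\<integral>\<^sup>+x1. \<integral>\<^sup>+x2. \<integral>\<^sup>+y1. \<integral>\<^sup>+y2. \<Phi> (U x1 x2) (\<lambda>i. y1 (t, i)) (\<lambda>j. y2 (t, j))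
        \<partial>PiM J2 N \<partial>PiM J1 B \<partial>PiM K2 N \<partial>PiM K1 B)"
    using \<Phi>_meas unfolding \<Omega>_eq
    by (simp add: split[OF fin] it_merge fst_merge snd_merge cong: nn_integral_cong)
  also have "\<dots> \<le> (\<integral>\<^sup>+x1. \<integral>\<^sup>+x2. H (U x1 x2) \<partial>PiM K2 N \<partial>PiM K1 B)"
  proof (intro nn_integral_mono)
    fix x1 x2
    have "U x1 x2 \<in> W"
      unfolding U_def it_def by (rule dpsgd_iter_in[OF W])
    then show "(\<integral>\<^sup>+y1. \<integral>\<^sup>+y2. \<Phi> (U x1 x2) (\<lambda>i. y1 (t, i)) (\<lambda>j. y2 (t, j)) \<partial>PiM J2 N \<partial>PiM J1 B)
        \<le> H (U x1 x2)"
      unfolding J1_def J2_def B_def N_def by (rule le)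
  qed
  also have "\<dots> = (\<integral>\<^sup>+\<omega>. H (it \<omega> t) \<partial>\<Omega>)"
    using H_meas unfolding \<Omega>_eq
    by (simp add: split[OF fin] it_merge J1.emeasure_space_1 J2.emeasure_space_1)
  finally show ?thesis .
qed

lemma nn_integral_dpsgd_step_le:
  fixes grad :: "real^'d::finite \<Rightarrow> 'z \<Rightarrow> real^'d"
  assumes b: "1 \<le> b" "b \<le> real n" and \<tau>: "0 \<le> \<tau>" and \<sigma>: "0 < \<sigma>"
  shows "(\<integral>\<^sup>+\<beta>. \<integral>\<^sup>+\<xi>. ennreal ((norm (dpsgd_step grad n Z \<eta> b \<tau> u (\<lambda>i. \<beta> (t, i)) (\<lambda>j. \<xi> (t, j)) - ws))\<^sup>2)
         \<partial>PiM ({t} \<times> UNIV) (\<lambda>_. density lborel (normal_density 0 \<sigma>))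
         \<partial>PiM ({t} \<times> {0..<n}) (\<lambda>_. measure_pmf (bernoulli_pmf (b / real n))))
     \<le> ennreal ((norm (u - ws))\<^sup>2 - 2 * \<eta> * (mean_clipped_grad grad n Z \<tau> u \<bullet> (u - ws))
           + \<eta>\<^sup>2 * (2 * \<tau>\<^sup>2 + real CARD('d) * \<sigma>\<^sup>2))"
proof -
  define S where "S \<beta> = (1 / b) *\<^sub>R (\<Sum>i<n. if \<beta> (t, i) then clip (grad u (Z i)) \<tau> else 0)" for \<beta>
  have step: "dpsgd_step grad n Z \<eta> b \<tau> u (\<lambda>i. \<beta> (t, i)) (\<lambda>j. \<xi> (t, j)) - ws
      = ((u - ws) - \<eta> *\<^sub>R S \<beta>) - \<eta> *\<^sub>R (\<chi> j. \<xi> (t, j))" for \<beta> \<xi>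
    by (simp add: dpsgd_step_def S_def algebra_simps)
  have "(\<integral>\<^sup>+\<beta>. \<integral>\<^sup>+\<xi>. ennreal ((norm (dpsgd_step grad n Z \<eta> b \<tau> u (\<lambda>i. \<beta> (t, i)) (\<lambda>j. \<xi> (t, j)) - ws))\<^sup>2)
         \<partial>PiM ({t} \<times> UNIV) (\<lambda>_. density lborel (normal_density 0 \<sigma>))
         \<partial>PiM ({t} \<times> {0..<n}) (\<lambda>_. measure_pmf (bernoulli_pmf (b / real n))))
      = (\<integral>\<^sup>+\<beta>. ennreal ((norm ((u - ws) - \<eta> *\<^sub>R S \<beta>))\<^sup>2 + \<eta>\<^sup>2 * real CARD('d) * \<sigma>\<^sup>2)
         \<partial>PiM ({t} \<times> {0..<n}) (\<lambda>_. measure_pmf (bernoulli_pmf (b / real n))))"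
    unfolding step nn_integral_gaussian_perturbation[OF \<sigma>] ..
  also have "\<dots> \<le> ennreal ((norm (u - ws))\<^sup>2 - 2 * \<eta> * ((u - ws) \<bullet> mean_clipped_grad grad n Z \<tau> u)
      + 2 * \<eta>\<^sup>2 * \<tau>\<^sup>2 + \<eta>\<^sup>2 * real CARD('d) * \<sigma>\<^sup>2)"
    unfolding S_def mean_clipped_grad_def
    by (rule nn_integral_subsample_step_le[OF b]) (simp_all add: norm_clip_le \<tau>)
  finally show ?thesis
    by (simp add: inner_commute algebra_simps)
qed

section \<open>Optimization risk for a fixed data set\<close>

text \<open>OR(T), with the uniformly random output index integrated out as an average over t.\<close>
definition dpsgd_opt_risk ::
  "(real^'d \<Rightarrow> 'z \<Rightarrow> real) \<Rightarrow> (real^'d \<Rightarrow> 'z \<Rightarrow> real^'d) \<Rightarrow> nat \<Rightarrow> (nat \<Rightarrow> 'z) \<Rightarrow> (real^'d) set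
   \<Rightarrow> real^'d \<Rightarrow> real \<Rightarrow> real \<Rightarrow> real \<Rightarrow> real \<Rightarrow> nat \<Rightarrow> real^'d::finite \<Rightarrow> real" where
  "dpsgd_opt_risk loss grad n Z W w0 \<eta> b \<tau> \<sigma> T ws =
     (1 / real T) * (\<Sum>t<T. \<integral>\<omega>. emp_obj loss n Z (dpsgd_iter grad n Z W w0 (\<lambda>_. \<eta>) b \<tau> \<omega> t)
        \<partial>(dpsgd_rand n T b \<sigma> :: ((nat \<times> nat \<Rightarrow> bool) \<times> (nat \<times> 'd \<Rightarrow> real)) measure))
     - emp_obj loss n Z ws"

locale dpsgd_run =
  fixes grad :: "real^'d::finite \<Rightarrow> 'z \<Rightarrow> real^'d" and n :: nat and Z :: "nat \<Rightarrow> 'z"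
    and W :: "(real^'d) set" and w0 :: "real^'d" and \<eta> b \<tau> \<sigma> :: real and T :: nat
  assumes grad_measurable [measurable]: "\<And>i. (\<lambda>w. grad w (Z i)) \<in> borel_measurable borel"
    and W: "convex W" "closed W" "bounded W" and w0: "w0 \<in> W"
    and b: "1 \<le> b" "b \<le> real n" and \<tau>: "0 < \<tau>" and \<sigma>: "0 < \<sigma>"
begin

abbreviation \<Omega> :: "((nat \<times> nat \<Rightarrow> bool) \<times> (nat \<times> 'd \<Rightarrow> real)) measure" where
  "\<Omega> \<equiv> dpsgd_rand n T b \<sigma>"

abbreviation iterate :: "(nat \<times> nat \<Rightarrow> bool) \<times> (nat \<times> 'd \<Rightarrow> real) \<Rightarrow> nat \<Rightarrow> real^'d" where
  "iterate \<omega> t \<equiv> dpsgd_iter grad n Z W w0 (\<lambda>_. \<eta>) b \<tau> \<omega> t"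

abbreviation clipped_grad :: "real^'d \<Rightarrow> real^'d" where
  "clipped_grad \<equiv> mean_clipped_grad grad n Z \<tau>"

sublocale prob_space \<Omega>
  by (rule prob_space_dpsgd_rand[OF \<sigma>])

lemma iterate_in: "iterate \<omega> t \<in> W"
  using W(2) w0 by (rule dpsgd_iter_in)

lemma borel_measurable_iterate [measurable]: "t \<le> T \<Longrightarrow> (\<lambda>\<omega>. iterate \<omega> t) \<in> borel_measurable \<Omega>"
  using W w0 by (intro borel_measurable_dpsgd_iter grad_measurable) auto

lemma borel_measurable_mean_clipped_grad [measurable]: "clipped_grad \<in> borel_measurable borel"
  unfolding mean_clipped_grad_def[abs_def] by measurable

lemma norm_diff_le_diameter: "u \<in> W \<Longrightarrow> v \<in> W \<Longrightarrow> norm (u - v) \<le> diameter W"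
  using diameter_bounded_bound[OF W(3)] by (simp add: dist_norm)

lemma integrable_iterate:
  fixes f :: "real^'d \<Rightarrow> real"
  assumes "t \<le> T" and [measurable]: "f \<in> borel_measurable borel" and "\<And>u. u \<in> W \<Longrightarrow> \<bar>f u\<bar> \<le> M"
  shows "integrable \<Omega> (\<lambda>\<omega>. f (iterate \<omega> t))"
  by (rule integrable_const_bound[where B=M]) (use assms iterate_in in auto)

lemma integrable_dist_sq:
  assumes "t \<le> T" "ws \<in> W"
  shows "integrable \<Omega> (\<lambda>\<omega>. (norm (iterate \<omega> t - ws))\<^sup>2)"
  using norm_diff_le_diameter[OF _ assms(2)] assms(1)
  by (intro integrable_iterate[where M="(diameter W)\<^sup>2"]) (auto intro: power_mono)

lemma integrable_inner_mean_clipped_grad: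
  assumes "t \<le> T" "ws \<in> W"
  shows "integrable \<Omega> (\<lambda>\<omega>. clipped_grad (iterate \<omega> t) \<bullet> (iterate \<omega> t - ws))"
proof (rule integrable_iterate[where M="\<tau> * diameter W"])
  fix u assume "u \<in> W"
  have "\<bar>clipped_grad u \<bullet> (u - ws)\<bar> \<le> norm (clipped_grad u) * norm (u - ws)"
    by (rule Cauchy_Schwarz_ineq2)
  also have "\<dots> \<le> \<tau> * diameter W"
    using norm_mean_clipped_grad_le[of \<tau>] norm_diff_le_diameter[OF \<open>u \<in> W\<close> assms(2)] \<tau>
    by (intro mult_mono) auto
  finally show "\<bar>clipped_grad u \<bullet> (u - ws)\<bar> \<le> \<tau> * diameter W" .
qed (use assms in simp_all)

lemma integrable_emp_obj_iterate:
  fixes loss :: "real^'d \<Rightarrow> 'z \<Rightarrow> real"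
  assumes deriv: "\<And>w z. ((\<lambda>v. loss v z) has_derivative (\<lambda>h. grad w z \<bullet> h)) (at w)" and t: "t \<le> T"
  shows "integrable \<Omega> (\<lambda>\<omega>. emp_obj loss n Z (iterate \<omega> t))"
proof -
  have cont: "continuous_on UNIV (emp_obj loss n Z)"
    by (intro continuous_at_imp_continuous_on ballI has_derivative_continuous[OF has_derivative_emp_obj[OF deriv]])
  have "compact W"
    using W by (simp add: compact_eq_bounded_closed)
  then have "bounded (emp_obj loss n Z ` W)"
    by (intro compact_imp_bounded compact_continuous_image continuous_on_subset[OF cont]) auto
  then obtain M where "\<And>u. u \<in> W \<Longrightarrow> \<bar>emp_obj loss n Z u\<bar> \<le> M"
    by (auto simp: bounded_iff)
  then show ?thesis
    by (intro integrable_iterate t borel_measurable_continuous_onI cont)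
qed

lemma expected_dist_step_le:
  assumes ws: "ws \<in> W" and t: "t < T"
  shows "(\<integral>\<omega>. (norm (iterate \<omega> (Suc t) - ws))\<^sup>2 \<partial>\<Omega>)
    \<le> (\<integral>\<omega>. (norm (iterate \<omega> t - ws))\<^sup>2 - 2 * \<eta> * (clipped_grad (iterate \<omega> t) \<bullet> (iterate \<omega> t - ws))
        + \<eta>\<^sup>2 * (2 * \<tau>\<^sup>2 + real CARD('d) * \<sigma>\<^sup>2) \<partial>\<Omega>)"
proof -
  define h where "h u = (norm (u - ws))\<^sup>2 - 2 * \<eta> * (clipped_grad u \<bullet> (u - ws)) + \<eta>\<^sup>2 * (2 * \<tau>\<^sup>2 + real CARD('d) * \<sigma>\<^sup>2)"
    for u
  note [measurable] = t[THEN less_imp_le] t[THEN Suc_leI] t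
  have h_nonneg: "0 \<le> h u" for u
  proof -
    have "0 \<le> (norm (u - ws))\<^sup>2 - 2 * \<eta> * (clipped_grad u \<bullet> (u - ws)) + \<eta>\<^sup>2 * \<tau>\<^sup>2"
      using \<tau> by (intro descent_quadratic_nonneg norm_mean_clipped_grad_le) simp
    moreover have "\<eta>\<^sup>2 * \<tau>\<^sup>2 \<le> \<eta>\<^sup>2 * (2 * \<tau>\<^sup>2 + real CARD('d) * \<sigma>\<^sup>2)"
      by (intro mult_left_mono) auto
    ultimately show ?thesis
      unfolding h_def by linarith
  qed
  have "ennreal (\<integral>\<omega>. (norm (iterate \<omega> (Suc t) - ws))\<^sup>2 \<partial>\<Omega>)
      = (\<integral>\<^sup>+\<omega>. ennreal ((norm (iterate \<omega> (Suc t) - ws))\<^sup>2) \<partial>\<Omega>)"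
    by (rule nn_integral_eq_integral[symmetric, OF integrable_dist_sq[OF Suc_leI[OF t] ws]]) simp
  also have "\<dots> \<le> (\<integral>\<^sup>+\<omega>. ennreal ((norm (dpsgd_step grad n Z \<eta> b \<tau> (iterate \<omega> t)
      (\<lambda>i. fst \<omega> (t, i)) (\<lambda>j. snd \<omega> (t, j)) - ws))\<^sup>2) \<partial>\<Omega>)"
    unfolding dpsgd_iter_Suc_step
    by (intro nn_integral_mono ennreal_leI power_mono norm_closest_point_diff_le W(1,2) ws) simp
  also have "\<dots> \<le> (\<integral>\<^sup>+\<omega>. ennreal (h (iterate \<omega> t)) \<partial>\<Omega>)"
  proof (rule nn_integral_dpsgd_iter_step_le[OF t \<sigma> W(2) w0])
    show "(\<lambda>\<omega>. ennreal ((norm (dpsgd_step grad n Z \<eta> b \<tau> (iterate \<omega> t)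
        (\<lambda>i. fst \<omega> (t, i)) (\<lambda>j. snd \<omega> (t, j)) - ws))\<^sup>2)) \<in> borel_measurable \<Omega>"
      unfolding dpsgd_step_def by measurable
    show "(\<lambda>\<omega>. ennreal (h (iterate \<omega> t))) \<in> borel_measurable \<Omega>"
      unfolding h_def by measurable
  qed (unfold h_def, rule nn_integral_dpsgd_step_le[OF b less_imp_le[OF \<tau>] \<sigma>])
  also have "\<dots> = ennreal (\<integral>\<omega>. h (iterate \<omega> t) \<partial>\<Omega>)"
    using integrable_dist_sq[OF _ ws] integrable_inner_mean_clipped_grad[OF _ ws] t
    by (intro nn_integral_eq_integral) (auto simp: h_def h_nonneg[unfolded h_def])
  finally show ?thesis
    using h_nonneg by (simp add: integral_nonneg_AE h_def)
qed

lemma excess_le_inner_mean_clipped_grad: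
  fixes loss :: "real^'d \<Rightarrow> 'z \<Rightarrow> real"
  assumes deriv: "\<And>w z. ((\<lambda>v. loss v z) has_derivative (\<lambda>h. grad w z \<bullet> h)) (at w)"
    and convex: "convex_on W (emp_obj loss n Z)" and u: "u \<in> W" and ws: "ws \<in> W"
    and bias: "(1 / real n) * (\<Sum>i<n. norm (grad u (Z i) - clip (grad u (Z i)) \<tau>)) \<le> \<beta>"
  shows "emp_obj loss n Z u - emp_obj loss n Z ws \<le> clipped_grad u \<bullet> (u - ws) + diameter W * \<beta>"
proof (rule convex_on_excess_le_inner[OF convex u ws has_derivative_emp_obj[OF deriv]])
  have "norm ((1 / real n) *\<^sub>R (\<Sum>i<n. grad u (Z i)) - clipped_grad u)
      = (1 / real n) * norm (\<Sum>i<n. grad u (Z i) - clip (grad u (Z i)) \<tau>)"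
    by (simp add: mean_clipped_grad_def sum_subtractf scaleR_diff_right[symmetric])
  also have "\<dots> \<le> (1 / real n) * (\<Sum>i<n. norm (grad u (Z i) - clip (grad u (Z i)) \<tau>))"
    by (intro mult_left_mono norm_sum) simp
  finally show "norm ((1 / real n) *\<^sub>R (\<Sum>i<n. grad u (Z i)) - clipped_grad u) \<le> \<beta>"
    using bias by linarith
qed (rule norm_diff_le_diameter[OF u ws])

lemma expected_excess_step_le:
  fixes loss :: "real^'d \<Rightarrow> 'z \<Rightarrow> real" and ws :: "real^'d"
  defines "f \<equiv> emp_obj loss n Z" and "E \<equiv> \<lambda>t. \<integral>\<omega>. (norm (iterate \<omega> t - ws))\<^sup>2 \<partial>\<Omega>"
  assumes deriv: "\<And>w z. ((\<lambda>v. loss v z) has_derivative (\<lambda>h. grad w z \<bullet> h)) (at w)"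
    and convex: "convex_on W f" and ws: "ws \<in> W" and \<eta>: "0 \<le> \<eta>" and t: "t < T"
    and bias: "\<And>u. u \<in> W \<Longrightarrow> (1 / real n) * (\<Sum>i<n. norm (grad u (Z i) - clip (grad u (Z i)) \<tau>)) \<le> \<beta>"
  shows "2 * \<eta> * ((\<integral>\<omega>. f (iterate \<omega> t) \<partial>\<Omega>) - f ws)
    \<le> E t - E (Suc t) + \<eta>\<^sup>2 * (2 * \<tau>\<^sup>2 + real CARD('d) * \<sigma>\<^sup>2) + 2 * \<eta> * diameter W * \<beta>"
proof -
  define I where "I = (\<integral>\<omega>. clipped_grad (iterate \<omega> t) \<bullet> (iterate \<omega> t - ws) \<partial>\<Omega>)"
  have tT: "t \<le> T"
    using t by simp
  note int_inner = integrable_inner_mean_clipped_grad[OF tT ws]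
  have int_f: "integrable \<Omega> (\<lambda>\<omega>. f (iterate \<omega> t))"
    unfolding f_def by (rule integrable_emp_obj_iterate[OF deriv tT])
  have dist_step: "E (Suc t) \<le> E t - 2 * \<eta> * I + \<eta>\<^sup>2 * (2 * \<tau>\<^sup>2 + real CARD('d) * \<sigma>\<^sup>2)"
    using expected_dist_step_le[OF ws t] integrable_dist_sq[OF tT ws] int_inner
    by (simp add: E_def I_def prob_space)
  have "(\<integral>\<omega>. f (iterate \<omega> t) \<partial>\<Omega>) - f ws = (\<integral>\<omega>. f (iterate \<omega> t) - f ws \<partial>\<Omega>)"
    using int_f by (simp add: prob_space)
  also have "\<dots> \<le> (\<integral>\<omega>. clipped_grad (iterate \<omega> t) \<bullet> (iterate \<omega> t - ws) + diameter W * \<beta> \<partial>\<Omega>)"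
    using int_f int_inner excess_le_inner_mean_clipped_grad[OF deriv convex[unfolded f_def] iterate_in ws bias]
    by (intro integral_mono) (auto simp: f_def iterate_in)
  also have "\<dots> = I + diameter W * \<beta>"
    using int_inner by (simp add: I_def prob_space)
  finally have "2 * \<eta> * ((\<integral>\<omega>. f (iterate \<omega> t) \<partial>\<Omega>) - f ws) \<le> 2 * \<eta> * (I + diameter W * \<beta>)"
    using \<eta> by (intro mult_left_mono) auto
  with dist_step show ?thesis
    by (simp add: algebra_simps)
qed

lemma excess_risk_le:
  fixes loss :: "real^'d \<Rightarrow> 'z \<Rightarrow> real"
  assumes deriv: "\<And>w z. ((\<lambda>v. loss v z) has_derivative (\<lambda>h. grad w z \<bullet> h)) (at w)"
    and convex: "convex_on W (emp_obj loss n Z)" and ws: "ws \<in> W" and \<eta>: "0 < \<eta>" and T: "0 < T"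
    and bias: "\<And>u. u \<in> W \<Longrightarrow> (1 / real n) * (\<Sum>i<n. norm (grad u (Z i) - clip (grad u (Z i)) \<tau>)) \<le> \<beta>"
  shows "dpsgd_opt_risk loss grad n Z W w0 \<eta> b \<tau> \<sigma> T ws
    \<le> (diameter W)\<^sup>2 / (2 * \<eta> * real T) + \<eta> * (2 * \<tau>\<^sup>2 + real CARD('d) * \<sigma>\<^sup>2) / 2 + diameter W * \<beta>"
proof -
  define f where "f = emp_obj loss n Z"
  define E where "E t = (\<integral>\<omega>. (norm (iterate \<omega> t - ws))\<^sup>2 \<partial>\<Omega>)" for t
  have "dpsgd_opt_risk loss grad n Z W w0 \<eta> b \<tau> \<sigma> T ws = (1 / real T) * (\<Sum>t<T. (\<integral>\<omega>. f (iterate \<omega> t) \<partial>\<Omega>) - f ws)"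
    using T by (simp add: dpsgd_opt_risk_def f_def sum_subtractf field_simps)
  also have "\<dots> \<le> (diameter W)\<^sup>2 / (2 * \<eta> * real T)
        + (\<eta>\<^sup>2 * (2 * \<tau>\<^sup>2 + real CARD('d) * \<sigma>\<^sup>2) + 2 * \<eta> * diameter W * \<beta>) / (2 * \<eta>)"
  proof (rule average_le_of_telescoping[OF _ \<eta> T])
    show "2 * \<eta> * ((\<integral>\<omega>. f (iterate \<omega> t) \<partial>\<Omega>) - f ws)
        \<le> E t - E (Suc t) + (\<eta>\<^sup>2 * (2 * \<tau>\<^sup>2 + real CARD('d) * \<sigma>\<^sup>2) + 2 * \<eta> * diameter W * \<beta>)" if "t < T" for t
      using expected_excess_step_le[OF deriv convex ws less_imp_le[OF \<eta>] that bias]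
      unfolding E_def f_def by (simp add: add.assoc)
    show "E 0 \<le> (diameter W)\<^sup>2"
      using norm_diff_le_diameter[OF w0 ws] by (simp add: E_def prob_space power_mono)
    show "0 \<le> E T"
      unfolding E_def by (rule integral_nonneg_AE) simp
  qed
  also have "\<dots> = (diameter W)\<^sup>2 / (2 * \<eta> * real T) + \<eta> * (2 * \<tau>\<^sup>2 + real CARD('d) * \<sigma>\<^sup>2) / 2 + diameter W * \<beta>"
    using \<eta> by (simp add: field_simps power2_eq_square)
  finally show ?thesis .
qed

end

section \<open>Tuned parameters\<close>

lemma tuned_clip_norm_identities:
  fixes G \<gamma> k s :: real
  defines "\<tau> \<equiv> G / \<gamma> powr (1 / k) * s powr (- 1 / (2 * k))"
  defines "Q \<equiv> G / \<gamma> powr (1 / k) * s powr ((1 - 1 / k) / 2)"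
  assumes k: "0 < k" and G: "0 < G" and \<gamma>: "0 < \<gamma>" and s: "0 < s"
  shows "\<tau> * s powr (1 / 2) = Q" "G powr k / (\<gamma> * \<tau> powr (k - 1)) = Q"
proof -
  have \<tau>: "0 < \<tau>"
    using G \<gamma> s by (simp add: \<tau>_def)
  have ln_\<tau>: "ln \<tau> = ln G - ln \<gamma> / k - ln s / (2 * k)"
    using G \<gamma> s by (simp add: \<tau>_def ln_mult ln_div ln_powr)
  have "ln (\<tau> * s powr (1 / 2)) = ln Q"
    using \<tau> G \<gamma> s k by (simp add: ln_mult ln_div ln_powr ln_\<tau> Q_def field_simps)
  then show "\<tau> * s powr (1 / 2) = Q"
    using \<tau> G \<gamma> s by (simp add: Q_def)
  have "ln (G powr k / (\<gamma> * \<tau> powr (k - 1))) = ln Q"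
    using \<tau> G \<gamma> s k by (simp add: ln_mult ln_div ln_powr ln_\<tau> Q_def field_simps)
  then show "G powr k / (\<gamma> * \<tau> powr (k - 1)) = Q"
    using \<tau> G \<gamma> s by (simp add: Q_def)
qed

text \<open>With Q = G \<gamma>^(-1/k) s^((1-1/k)/2), the tuned \<tau> and \<eta> make the three terms of the
  excess-risk bound equal to D Q / 2, at most D Q, and D Q respectively.\<close>
lemma tuned_parameters_bound:
  fixes D G \<gamma> k T \<phi> :: real
  defines "s \<equiv> 1 / T + \<phi>\<^sup>2"
  defines "\<tau> \<equiv> G / \<gamma> powr (1 / k) * s powr (- 1 / (2 * k))"
  defines "\<eta> \<equiv> D / (T * \<tau>) * s powr (- 1 / 2)"
  assumes k: "0 < k" and G: "0 < G" and \<gamma>: "0 < \<gamma>" and T: "0 < T" and D: "0 < D"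
  shows "D\<^sup>2 / (2 * \<eta> * T) + \<eta> * (2 * \<tau>\<^sup>2 + T * \<tau>\<^sup>2 * \<phi>\<^sup>2) / 2 + D * (G powr k / (\<gamma> * \<tau> powr (k - 1)))
     \<le> 5 * D * G / (2 * \<gamma> powr (1 / k)) * s powr ((1 - 1 / k) / 2)"
proof -
  define r where "r = s powr (1 / 2)"
  define Q where "Q = G / \<gamma> powr (1 / k) * s powr ((1 - 1 / k) / 2)"
  have s: "0 < s"
    using T by (simp add: s_def add_pos_nonneg)
  then have r: "0 < r" "r * r = s"
    by (simp_all add: r_def powr_add[symmetric])
  have \<tau>: "0 < \<tau>"
    using G \<gamma> s by (simp add: \<tau>_def)
  note \<tau>r = tuned_clip_norm_identities(1)[OF k G \<gamma> s, folded \<tau>_def r_def Q_def]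
  note bias = tuned_clip_norm_identities(2)[OF k G \<gamma> s, folded \<tau>_def Q_def]
  have \<eta>: "\<eta> = D / (T * \<tau> * r)"
    using s by (simp add: \<eta>_def r_def powr_minus_divide)
  have "D\<^sup>2 / (2 * \<eta> * T) = D * Q / 2"
    using D T \<tau> r by (simp add: \<eta> \<tau>r[symmetric] field_simps power2_eq_square)
  moreover have "\<eta> * (2 * \<tau>\<^sup>2 + T * \<tau>\<^sup>2 * \<phi>\<^sup>2) / 2 \<le> D * Q"
  proof -
    have "\<eta> * (2 * \<tau>\<^sup>2 + T * \<tau>\<^sup>2 * \<phi>\<^sup>2) / 2 = D * \<tau> * (2 / T + \<phi>\<^sup>2) / (2 * r)"
      using D T \<tau> r by (simp add: \<eta> field_simps power2_eq_square)
    also have "\<dots> \<le> D * \<tau> * (2 * s) / (2 * r)"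
      using D \<tau> r T by (intro divide_right_mono mult_left_mono) (auto simp: s_def)
    also have "\<dots> = D * Q"
      using r by (simp add: \<tau>r[symmetric] field_simps)
    finally show ?thesis .
  qed
  ultimately have "D\<^sup>2 / (2 * \<eta> * T) + \<eta> * (2 * \<tau>\<^sup>2 + T * \<tau>\<^sup>2 * \<phi>\<^sup>2) / 2 + D * (G powr k / (\<gamma> * \<tau> powr (k - 1)))
      \<le> 5 / 2 * (D * Q)"
    unfolding bias by simp
  also have "\<dots> = 5 * D * G / (2 * \<gamma> powr (1 / k)) * s powr ((1 - 1 / k) / 2)"
    by (simp add: Q_def)
  finally show ?thesis .
qed

lemma tuned_bound_at_T_eq_inverse_square:
  fixes C \<gamma> k \<phi> :: real
  assumes \<phi>: "0 < \<phi>"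
  shows "C / (2 * \<gamma> powr (1 / k)) * (\<phi>\<^sup>2 + \<phi>\<^sup>2) powr ((1 - 1 / k) / 2)
    = C / (2 powr ((1 + 1 / k) / 2) * \<gamma> powr (1 / k)) * \<phi> powr (1 - 1 / k)"
proof -
  have "(2::real) powr ((1 - 1 / k) / 2) = 2 powr (1 - (1 + 1 / k) / 2)"
    by (rule arg_cong[where f="\<lambda>e. 2 powr e"]) (simp add: field_simps)
  then have two: "(2::real) powr ((1 - 1 / k) / 2) = 2 / 2 powr ((1 + 1 / k) / 2)"
    by (simp add: powr_diff)
  have "(\<phi>\<^sup>2 + \<phi>\<^sup>2) powr ((1 - 1 / k) / 2) = 2 powr ((1 - 1 / k) / 2) * (\<phi> powr 2) powr ((1 - 1 / k) / 2)"
    using \<phi> by (simp add: powr_realpow powr_mult)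
  also have "\<dots> = 2 / 2 powr ((1 + 1 / k) / 2) * \<phi> powr (1 - 1 / k)"
  proof -
    have e: "2 * ((1 - 1 / k) / 2) = 1 - 1 / k"
      by simp
    show ?thesis
      unfolding two powr_powr e ..
  qed
  finally have "(\<phi>\<^sup>2 + \<phi>\<^sup>2) powr ((1 - 1 / k) / 2) = 2 / 2 powr ((1 + 1 / k) / 2) * \<phi> powr (1 - 1 / k)" .
  then show ?thesis
    by (cases "\<gamma> powr (1 / k) = 0") (simp_all add: field_simps)
qed

lemma dpsgd_tuned_opt_risk_le:
  fixes grad :: "real^'d::finite \<Rightarrow> 'z \<Rightarrow> real^'d" and loss :: "real^'d \<Rightarrow> 'z \<Rightarrow> real"
    and Gf :: "'z \<Rightarrow> real" and W :: "(real^'d) set" and w0 ws :: "real^'d"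
    and k G \<gamma> \<phi> b \<sigma> :: real and n T :: nat and Z :: "nat \<Rightarrow> 'z"
  defines "s \<equiv> 1 / real T + \<phi>\<^sup>2"
  defines "\<tau> \<equiv> G / \<gamma> powr (1 / k) * s powr (- 1 / (2 * k))"
  defines "\<eta> \<equiv> diameter W / (real T * \<tau>) * s powr (- 1 / 2)"
  assumes deriv: "\<And>w z. ((\<lambda>v. loss v z) has_derivative (\<lambda>h. grad w z \<bullet> h)) (at w)"
    and W: "convex W" "closed W" "bounded W" and w0: "w0 \<in> W" and ws: "ws \<in> W"
    and convex: "convex_on W (emp_obj loss n Z)"
    and b: "1 \<le> b" "b \<le> real n" and k: "1 < k" and G: "0 < G" and \<gamma>: "0 < \<gamma>" and T: "1 \<le> T"
    and \<sigma>: "0 < \<sigma>" and noise: "real CARD('d) * \<sigma>\<^sup>2 = real T * \<tau>\<^sup>2 * \<phi>\<^sup>2"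
    and grad_le: "\<And>i w. i < n \<Longrightarrow> w \<in> W \<Longrightarrow> norm (grad w (Z i)) \<le> Gf (Z i)"
    and moment: "(1 / real n) * (\<Sum>i<n. Gf (Z i) powr k) \<le> G powr k / \<gamma>"
  shows "dpsgd_opt_risk loss grad n Z W w0 \<eta> b \<tau> \<sigma> T ws
    \<le> 5 * diameter W * G / (2 * \<gamma> powr (1 / k)) * s powr ((1 - 1 / k) / 2)"
proof -
  have s: "0 < s"
    using T by (simp add: s_def add_pos_nonneg)
  have \<tau>: "0 < \<tau>"
    using G \<gamma> s by (simp add: \<tau>_def)
  interpret dpsgd_run grad n Z W w0 \<eta> b \<tau> \<sigma> T
    by unfold_locales (use borel_measurable_gradient[OF deriv] W w0 b \<tau> \<sigma> in auto)
  show ?thesis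
  proof (cases "diameter W = 0")
    case True
    then have "iterate \<omega> t = ws" for \<omega> t
      using norm_diff_le_diameter[OF iterate_in ws] by simp
    then show ?thesis
      using True T by (simp add: dpsgd_opt_risk_def prob_space)
  next
    case False
    then have D: "0 < diameter W"
      using diameter_ge_0[OF W(3)] by linarith
    then have \<eta>: "0 < \<eta>"
      using T \<tau> s by (simp add: \<eta>_def)
    have "dpsgd_opt_risk loss grad n Z W w0 \<eta> b \<tau> \<sigma> T ws
        \<le> (diameter W)\<^sup>2 / (2 * \<eta> * real T) + \<eta> * (2 * \<tau>\<^sup>2 + real CARD('d) * \<sigma>\<^sup>2) / 2
          + diameter W * (G powr k / \<gamma> / \<tau> powr (k - 1))"
    proof (rule excess_risk_le[OF deriv convex ws \<eta>])
      show "(1 / real n) * (\<Sum>i<n. norm (grad u (Z i) - clip (grad u (Z i)) \<tau>)) \<le> G powr k / \<gamma> / \<tau> powr (k - 1)"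
        if "u \<in> W" for u
        by (rule mean_clipping_bias_le[OF \<tau> _ _ moment]) (use k grad_le that in auto)
    qed (use T in simp)
    also have "\<dots> \<le> 5 * diameter W * G / (2 * \<gamma> powr (1 / k)) * s powr ((1 - 1 / k) / 2)"
      using tuned_parameters_bound[of k G \<gamma> "real T" "diameter W" \<phi>] k G \<gamma> T D
      unfolding noise \<eta>_def \<tau>_def s_def by simp
    finally show ?thesis .
  qed
qed

lemma dp_noise_calibration:
  fixes \<nu> \<delta> \<epsilon> \<tau> :: real and n T d :: nat
  defines "\<phi> \<equiv> sqrt (\<nu> * real d * ln (1 / \<delta>)) / (real n * \<epsilon>)"
  defines "\<sigma> \<equiv> sqrt (\<nu> * real T * ln (1 / \<delta>) * \<tau>\<^sup>2 / ((real n)\<^sup>2 * \<epsilon>\<^sup>2))"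
  assumes \<nu>: "0 < \<nu>" and \<delta>: "0 < \<delta>" "\<delta> < 1" and n: "0 < n" and \<epsilon>: "0 < \<epsilon>"
    and T: "0 < T" and d: "0 < d" and \<tau>: "\<tau> \<noteq> 0"
  shows "0 < \<phi>" "0 < \<sigma>" "real d * \<sigma>\<^sup>2 = real T * \<tau>\<^sup>2 * \<phi>\<^sup>2"
  using assms by (simp_all add: \<phi>_def \<sigma>_def power_divide power_mult_distrib)

lemma moment_bound_event:
  fixes Gf :: "'z \<Rightarrow> real" and P :: "'z \<Rightarrow> bool"
  assumes M: "prob_space M" and Gf: "Gf \<in> borel_measurable M" "integrable M (\<lambda>z. Gf z powr k)"
    and moment: "(\<integral>z. Gf z powr k \<partial>M) powr (1 / k) \<le> G"
    and k: "0 < k" and G: "0 < G" and \<gamma>: "0 < \<gamma>" and n: "0 < n" and P: "AE z in M. P z"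
  shows "\<exists>A \<in> sets (PiM {0..<n} (\<lambda>_. M)). 1 - \<gamma> \<le> measure (PiM {0..<n} (\<lambda>_. M)) A \<and>
    (\<forall>Z\<in>A. Z \<in> space (PiM {0..<n} (\<lambda>_. M)) \<and> (1 / real n) * (\<Sum>i<n. Gf (Z i) powr k) \<le> G powr k / \<gamma>
      \<and> (\<forall>i<n. P (Z i)))"
proof -
  have "(\<integral>z. Gf z powr k \<partial>M) \<le> G powr k"
    using powr_mono2[OF _ _ moment, of k] k integral_nonneg_AE[of "\<lambda>z. Gf z powr k" M]
    by (simp add: powr_powr)
  then have prob: "1 - \<gamma> \<le> 1 - (\<integral>z. Gf z powr k \<partial>M) / (G powr k / \<gamma>)"
    using G \<gamma> by (simp add: field_simps)
  have "(\<lambda>z. Gf z powr k) \<in> borel_measurable M"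
    using Gf(1) by measurable
  moreover have "0 < G powr k / \<gamma>"
    using G \<gamma> by simp
  ultimately obtain A where A: "A \<in> sets (PiM {0..<n} (\<lambda>_. M))"
      "1 - (\<integral>z. Gf z powr k \<partial>M) / (G powr k / \<gamma>) \<le> measure (PiM {0..<n} (\<lambda>_. M)) A"
    and good: "\<forall>Z\<in>A. Z \<in> space (PiM {0..<n} (\<lambda>_. M))
      \<and> (1 / real n) * (\<Sum>i<n. Gf (Z i) powr k) < G powr k / \<gamma> \<and> (\<forall>i<n. P (Z i))"
    using sample_mean_less_event[OF M _ Gf(2) _ _ n P] by fastforce
  show ?thesis
  proof (intro bexI[OF _ A(1)] conjI)
    show "1 - \<gamma> \<le> measure (PiM {0..<n} (\<lambda>_. M)) A"
      using prob A(2) by linarith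
    show "\<forall>Z\<in>A. Z \<in> space (PiM {0..<n} (\<lambda>_. M))
        \<and> (1 / real n) * (\<Sum>i<n. Gf (Z i) powr k) \<le> G powr k / \<gamma> \<and> (\<forall>i<n. P (Z i))"
      using good by (auto intro: less_imp_le)
  qed
qed

theorem mainTheorem2:
  fixes Dist :: "'z measure"
    and loss :: "real^'d \<Rightarrow> 'z \<Rightarrow> real"
    and grad :: "real^'d \<Rightarrow> 'z \<Rightarrow> real^'d"
    and W :: "(real^'d) set"
    and Gf :: "'z \<Rightarrow> real"
    and k G \<gamma> \<epsilon> \<delta> \<nu> b :: real
    and n T :: nat
    and w0 :: "real^'d"
  assumes D_prob: "prob_space Dist"
    and grad: "\<And>w z. ((\<lambda>v. loss v z) has_derivative (\<lambda>h. grad w z \<bullet> h)) (at w)"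
    and W_bounded: "bounded W" and W_convex: "convex W" and W_closed: "closed W"
    and w0: "w0 \<in> W"
    and Gf_nonneg: "\<And>z. Gf z \<ge> 0"
    and Gf_meas: "Gf \<in> borel_measurable Dist"
    and Gf_bound: "AE z in Dist. \<forall>w\<in>W. norm (grad w z) \<le> Gf z"
    and k: "k > 1" and G: "G > 0"
    and Gf_int: "integrable Dist (\<lambda>z. Gf z powr k)"
    and Gf_moment: "(\<integral>z. Gf z powr k \<partial>Dist) powr (1 / k) \<le> G"
    and n: "n \<ge> 1"
    and f_convex: "\<And>Z. Z \<in> space (PiM {0..<n} (\<lambda>_. Dist)) \<Longrightarrow> convex_on W (emp_obj loss n Z)"
    and \<gamma>: "0 < \<gamma>" "\<gamma> < 1"
    and T: "T \<ge> 1"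
    and \<epsilon>: "\<epsilon> > 0" and \<delta>: "0 < \<delta>" "\<delta> < 1" and \<nu>: "\<nu> > 0"
    and b: "1 \<le> b" "b \<le> real n"
  shows
    "let \<phi> = sqrt (\<nu> * real CARD('d) * ln (1 / \<delta>)) / (real n * \<epsilon>);
         DW = diameter W;
         \<tau> = G / \<gamma> powr (1 / k) * (1 / real T + \<phi>\<^sup>2) powr (- 1 / (2 * k));
         \<eta> = DW / (real T * \<tau>) * (1 / real T + \<phi>\<^sup>2) powr (- 1 / 2);
         \<sigma>sq = \<nu> * real T * ln (1 / \<delta>) * \<tau>\<^sup>2 / ((real n)\<^sup>2 * \<epsilon>\<^sup>2);
         \<Omega> = (dpsgd_rand n T b (sqrt \<sigma>sq) :: ((nat \<times> nat \<Rightarrow> bool) \<times> (nat \<times> 'd \<Rightarrow> real)) measure);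
         OR = (\<lambda>Z ws. (1 / real T) * (\<Sum>t<T. \<integral>\<omega>. emp_obj loss n Z
                  (dpsgd_iter grad n Z W w0 (\<lambda>_. \<eta>) b \<tau> \<omega> t) \<partial>\<Omega>) - emp_obj loss n Z ws)
     in \<exists>A \<in> sets (PiM {0..<n} (\<lambda>_. Dist)).
          measure (PiM {0..<n} (\<lambda>_. Dist)) A \<ge> 1 - \<gamma> \<and>
          (\<forall>Z\<in>A. \<forall>ws\<in>W. (\<forall>w\<in>W. emp_obj loss n Z ws \<le> emp_obj loss n Z w) \<longrightarrow>
             OR Z ws \<le> 5 * DW * G / (2 * \<gamma> powr (1 / k)) * (1 / real T + \<phi>\<^sup>2) powr ((1 - 1 / k) / 2)
             \<and> (real T = 1 / \<phi>\<^sup>2 \<longrightarrow>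
                OR Z ws \<le> 5 * DW * G / (2 powr ((1 + 1 / k) / 2) * \<gamma> powr (1 / k)) * \<phi> powr (1 - 1 / k)))"
proof -
  let ?PZ = "PiM {0..<n} (\<lambda>_. Dist)"
  define \<phi> where "\<phi> = sqrt (\<nu> * real CARD('d) * ln (1 / \<delta>)) / (real n * \<epsilon>)"
  define \<tau> where "\<tau> = G / \<gamma> powr (1 / k) * (1 / real T + \<phi>\<^sup>2) powr (- 1 / (2 * k))"
  define \<eta> where "\<eta> = diameter W / (real T * \<tau>) * (1 / real T + \<phi>\<^sup>2) powr (- 1 / 2)"
  define \<sigma> where "\<sigma> = sqrt (\<nu> * real T * ln (1 / \<delta>) * \<tau>\<^sup>2 / ((real n)\<^sup>2 * \<epsilon>\<^sup>2))"
  define bound where "bound = 5 * diameter W * G / (2 * \<gamma> powr (1 / k)) * (1 / real T + \<phi>\<^sup>2) powr ((1 - 1 / k) / 2)"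
  have "0 < 1 / real T + \<phi>\<^sup>2"
    using T by (simp add: add_pos_nonneg)
  then have "\<tau> \<noteq> 0"
    using G \<gamma> by (simp add: \<tau>_def)
  then have \<phi>: "0 < \<phi>" and \<sigma>: "0 < \<sigma>" and noise: "real CARD('d) * \<sigma>\<^sup>2 = real T * \<tau>\<^sup>2 * \<phi>\<^sup>2"
    using dp_noise_calibration[of \<nu> \<delta> n \<epsilon> T "CARD('d)" \<tau>] \<nu> \<delta> n \<epsilon> T unfolding \<phi>_def \<sigma>_def by auto
  obtain A where A: "A \<in> sets ?PZ" "1 - \<gamma> \<le> measure ?PZ A"
    and good: "\<And>Z. Z \<in> A \<Longrightarrow> Z \<in> space ?PZ \<and> (1 / real n) * (\<Sum>i<n. Gf (Z i) powr k) \<le> G powr k / \<gamma>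
      \<and> (\<forall>i<n. \<forall>w\<in>W. norm (grad w (Z i)) \<le> Gf (Z i))"
    using moment_bound_event[where n=n, OF D_prob Gf_meas Gf_int Gf_moment _ G \<gamma>(1) _ Gf_bound] k n by auto
  have risk: "dpsgd_opt_risk loss grad n Z W w0 \<eta> b \<tau> \<sigma> T ws \<le> bound" if "Z \<in> A" "ws \<in> W" for Z ws
    using dpsgd_tuned_opt_risk_le[where \<phi>=\<phi> and Z=Z, OF grad W_convex W_closed W_bounded w0 that(2) f_convex b k G \<gamma>(1) T \<sigma>,
        folded \<tau>_def \<eta>_def bound_def] noise good[OF that(1)] by blast
  have risk_at_T: "dpsgd_opt_risk loss grad n Z W w0 \<eta> b \<tau> \<sigma> T ws
      \<le> 5 * diameter W * G / (2 powr ((1 + 1 / k) / 2) * \<gamma> powr (1 / k)) * \<phi> powr (1 - 1 / k)"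
    if "Z \<in> A" "ws \<in> W" "real T = 1 / \<phi>\<^sup>2" for Z ws
    using risk[OF that(1,2)] tuned_bound_at_T_eq_inverse_square[OF \<phi>] that(3) \<phi> by (simp add: bound_def)
  show ?thesis
    unfolding Let_def \<phi>_def[symmetric] \<tau>_def[symmetric] \<eta>_def[symmetric] \<sigma>_def[symmetric] bound_def[symmetric]
      dpsgd_opt_risk_def[symmetric]
    by (intro bexI[OF _ A(1)] conjI ballI impI A(2) risk risk_at_T)
qed

end
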